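(* The permutation defect fusion product $\otimes$ on $C^\times_{S_n}$ (given by the product of $C^{\boxtimes n}$ on anyons, anyon–defect fusion on mixed products, and defect fusion on pairs of defects, extended bilinearly) is associative, making $(C^\times_{S_n},\otimes)$ into a ring.
   Context: Let $\mathcal{C}$ be a modular tensor category, $\mathrm{Irr}(\mathcal{C})$ its finite set of isomorphism classes of simple objects (containing $1$), $a\mapsto a^*$ duality, $C$ its fusion ring (free $\mathbb{Z}$-module on $\mathrm{Irr}(\mathcal{C})$, product $a\otimes b=\sum_cN_{ab}^cc$). Fix $n\ge2$. $C^{\boxtimes n}=C^{\otimes_{\mathbb{Z}}n}$ has basis the multilayer anyons $\vec a=a_1\boxtimes\cdots\boxtimes a_n$, layerwise product, unit $\vec1$; $S_n$ acts by permuting layers ($\rho$ moves layer $i$ to $\rho(i)$); permutations compose right to left. For $\sigma\in S_n$ with orbits $\mathcal{O}(\sigma)$ (cycles incl. fixed points), $\vec a$ is $\sigma$-fixed iff constant on orbits. $C_\sigma$: free $\mathbb{Z}$-module on symbols $X^\sigma_{\vec a}$ ($\vec a$ $\sigma$-fixed), identified with $R_\sigma=\bigotimes_{O\in\mathcal{O}(\sigma)}C$ via $X^\sigma_{\vec a}\leftrightarrow\bigotimes_Oa_O$; $X^\sigma_r$ for $r\in R_\sigma$. $C_{\mathrm{id}}=C^{\boxtimes n}$ ($X^{\mathrm{id}}_{\vec a}=\vec a$), $C^\times_{S_n}=\bigoplus_\sigma C_\sigma$. Confinement $c_\sigma:C^{\boxtimes n}\to R_\sigma$, linear, $c_\sigma(\vec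 a)=\bigotimes_O(\bigotimes_{k\in O}a_k)$. Anyon–defect fusion $\vec a\otimes X^\sigma_{\vec b}=X^\sigma_{\vec b}\otimes\vec a:=X^\sigma_{c_\sigma(\vec a)\cdot\vec b}$. A $\sigma$-deconfinement $d_\sigma(\vec b)$: any $d\in C^{\boxtimes n}$ with nonnegative coefficients and $d\otimes X^\sigma_{\vec1}=X^\sigma_{\vec b}$. For $t=(ij)$, $\Omega_t=\sum_{c}\vec e_c$ ($c$ in layer $i$, $c^*$ in layer $j$, $1$ elsewhere). Following the paper's algorithm, $F(\rho,\sigma)\in C^{\boxtimes n}$: write $\rho=t_1\cdots t_m$ with each disjoint cycle $(i_1\cdots i_l)$ written as $(i_1i_2)(i_2i_3)\cdots(i_{l-1}i_l)$; $\pi_{m+1}=\sigma$, $\pi_k=t_k\pi_{k+1}$; $F=\prod\Omega_{t_k}$ over $k$ with both indices of $t_k$ in a common cycle of $\pi_{k+1}$. Defect fusion: $X^\rho_{\vec a}\otimes X^\sigma_{\vec b}:=(d_\rho(\vec a)\otimes d_\sigma(\vec b)\otimes F(\rho,\sigma))\otimes X^{\rho\sigma}_{\vec1}$. *)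

theory Defs
  imports Complex_Main "HOL-Combinatorics.Cycles" "HOL-Combinatorics.Permutations"
begin

text \<open>Simple objects: a finite type 'a; unit object one; duality dual;
  fusion multiplicities N a b c = N_{ab}^c.\<close>

definition mtc_fusion_rules ::
  "('a::finite \<Rightarrow> 'a \<Rightarrow> 'a \<Rightarrow> nat) \<Rightarrow> 'a \<Rightarrow> ('a \<Rightarrow> 'a) \<Rightarrow> bool" where
  "mtc_fusion_rules N one dual \<longleftrightarrow>
     (\<forall>a. dual (dual a) = a) \<and> dual one = one \<and>
     (\<forall>a b. N one a b = (if a = b then 1 else 0)) \<and>
     (\<forall>a b. N a one b = (if a = b then 1 else 0)) \<and>
     (\<forall>a b c. N a b c = N b a c) \<and>
     (\<forall>a b c d. (\<Sum>e\<in>UNIV. N a b e * N e c d) = (\<Sum>e\<in>UNIV. N b c e * N a e d)) \<and>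
     (\<forall>a b. N a b one = (if b = dual a then 1 else 0)) \<and>
     (\<forall>a b c. N a b c = N (dual a) c b) \<and>
     (\<forall>a b c. N a b c = N (dual a) (dual b) (dual c)) \<and>
     (\<exists>S :: 'a \<Rightarrow> 'a \<Rightarrow> complex.
        (\<forall>a b. S a b = S b a) \<and>
        (\<forall>a b. (\<Sum>x\<in>UNIV. S a x * cnj (S b x)) = (if a = b then 1 else 0)) \<and>
        (\<forall>a b. S (dual a) b = cnj (S a b)) \<and>
        (\<forall>x. S one x \<noteq> 0) \<and>
        (\<forall>a b c. of_nat (N a b c) = (\<Sum>x\<in>UNIV. S a x * S b x * cnj (S c x) / S one x)))"

section \<open>The fusion ring C (elements: 'a \<Rightarrow> int)\<close>

definition delta :: "'b \<Rightarrow> 'b \<Rightarrow> int" where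
  "delta a = (\<lambda>c. if c = a then 1 else 0)"

definition fmul :: "('a::finite \<Rightarrow> 'a \<Rightarrow> 'a \<Rightarrow> nat) \<Rightarrow> ('a \<Rightarrow> int) \<Rightarrow> ('a \<Rightarrow> int) \<Rightarrow> 'a \<Rightarrow> int" where
  "fmul N x y = (\<lambda>c. \<Sum>a\<in>UNIV. \<Sum>b\<in>UNIV. x a * y b * int (N a b c))"

definition fprod_list :: "('a::finite \<Rightarrow> 'a \<Rightarrow> 'a \<Rightarrow> nat) \<Rightarrow> 'a \<Rightarrow> 'a list \<Rightarrow> 'a \<Rightarrow> int" where
  "fprod_list N one xs = foldr (\<lambda>a r. fmul N (delta a) r) xs (delta one)"

text \<open>Layers: a finite type 'n with CARD('n) = n.  Permutations: functions
  \<sigma> with \<sigma> permutes UNIV; composition is right to left (\<rho>\<sigma> = \<rho> \<circ> \<sigma>).\<close>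

definition perms :: "('n \<Rightarrow> 'n) set" where
  "perms = {p. p permutes UNIV}"

definition porb :: "('n \<Rightarrow> 'n) \<Rightarrow> 'n \<Rightarrow> 'n set" where
  "porb \<sigma> k = {(\<sigma> ^^ j) k | j. True}"

definition orbs :: "('n \<Rightarrow> 'n) \<Rightarrow> 'n set set" where
  "orbs \<sigma> = range (porb \<sigma>)"

definition olist :: "'n set \<Rightarrow> 'n list" where
  "olist Ob = (SOME xs. distinct xs \<and> set xs = Ob)"

definition orep :: "'n set \<Rightarrow> 'n" where
  "orep Ob = (SOME k. k \<in> Ob)"

definition sameorb :: "('n \<Rightarrow> 'n) \<Rightarrow> 'n \<Rightarrow> 'n \<Rightarrow> bool" where
  "sameorb \<pi> i j \<longleftrightarrow> (\<exists>m. (\<pi> ^^ m) i = j)"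

definition sfixed :: "('n \<Rightarrow> 'n) \<Rightarrow> ('n \<Rightarrow> 'a) \<Rightarrow> bool" where
  "sfixed \<sigma> b \<longleftrightarrow> (\<forall>k. b (\<sigma> k) = b k)"

section \<open>Multilayer anyons C^{\<boxtimes>n}: elements ('n \<Rightarrow> 'a) \<Rightarrow> int\<close>

definition avec :: "'a \<Rightarrow> 'n \<Rightarrow> 'a" where
  "avec one = (\<lambda>_. one)"

definition amul :: "('a::finite \<Rightarrow> 'a \<Rightarrow> 'a \<Rightarrow> nat) \<Rightarrow> (('n::finite \<Rightarrow> 'a) \<Rightarrow> int)
    \<Rightarrow> (('n \<Rightarrow> 'a) \<Rightarrow> int) \<Rightarrow> ('n \<Rightarrow> 'a) \<Rightarrow> int" where
  "amul N x y = (\<lambda>v. \<Sum>u\<in>UNIV. \<Sum>w\<in>UNIV. x u * y w * (\<Prod>i\<in>UNIV. int (N (u i) (w i) (v i))))"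

text \<open>Elements of R_\<sigma> = \<Otimes>_{Ob} C are represented as functions on \<sigma>-fixed
  labels (X^\<sigma>_b \<leftrightarrow> \<Otimes>_O b_O), zero on non-fixed labels.\<close>

definition rmul :: "('a::finite \<Rightarrow> 'a \<Rightarrow> 'a \<Rightarrow> nat) \<Rightarrow> ('n::finite \<Rightarrow> 'n)
    \<Rightarrow> (('n \<Rightarrow> 'a) \<Rightarrow> int) \<Rightarrow> (('n \<Rightarrow> 'a) \<Rightarrow> int) \<Rightarrow> ('n \<Rightarrow> 'a) \<Rightarrow> int" where
  "rmul N \<sigma> r s = (\<lambda>b. if sfixed \<sigma> b then
      (\<Sum>u\<in>{u. sfixed \<sigma> u}. \<Sum>w\<in>{w. sfixed \<sigma> w}. r u * s w *
         (\<Prod>Ob\<in>orbs \<sigma>. int (N (u (orep Ob)) (w (orep Ob)) (b (orep Ob)))))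
     else 0)"

definition conf :: "('a::finite \<Rightarrow> 'a \<Rightarrow> 'a \<Rightarrow> nat) \<Rightarrow> 'a \<Rightarrow> ('n::finite \<Rightarrow> 'n)
    \<Rightarrow> (('n \<Rightarrow> 'a) \<Rightarrow> int) \<Rightarrow> ('n \<Rightarrow> 'a) \<Rightarrow> int" where
  "conf N one \<sigma> x = (\<lambda>b. if sfixed \<sigma> b then
      (\<Sum>u\<in>UNIV. x u * (\<Prod>Ob\<in>orbs \<sigma>. fprod_list N one (map u (olist Ob)) (b (orep Ob))))
     else 0)"

text \<open>\<Omega>_{(ij)} = \<Sum>_c (c in layer i, c^* in layer j, 1 elsewhere).\<close>
definition Omega :: "('a \<Rightarrow> 'a) \<Rightarrow> 'a \<Rightarrow> 'n \<Rightarrow> 'n \<Rightarrow> ('n \<Rightarrow> 'a) \<Rightarrow> int" where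
  "Omega dual one i j = (\<lambda>v. if v j = dual (v i) \<and> (\<forall>k. k \<noteq> i \<and> k \<noteq> j \<longrightarrow> v k = one) then 1 else 0)"

text \<open>A cycle decomposition of \<rho>: disjoint cycles (i_1 ... i_l), l \<ge> 2, with
  \<rho> their product; the cycle (i_1 ... i_l) is cycle_of_list [i_1,...,i_l]
  = (i_1 i_2)(i_2 i_3)...(i_{l-1} i_l).\<close>
definition is_cycle_decomp :: "('n \<Rightarrow> 'n) \<Rightarrow> 'n list list \<Rightarrow> bool" where
  "is_cycle_decomp \<rho> cs \<longleftrightarrow>
     (\<forall>c\<in>set cs. 2 \<le> length c) \<and> distinct (concat cs) \<and>
     \<rho> = foldr (\<lambda>c p. cycle_of_list c \<circ> p) cs id"

definition transp_list :: "'n list list \<Rightarrow> ('n \<times> 'n) list" where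
  "transp_list cs = concat (map (\<lambda>c. zip c (tl c)) cs)"

text \<open>For the word ts = t_k ... t_m: \<pi>_{k+1} = t_{k+1} ... t_m \<sigma>, and factor
  \<Omega>_{t_k} is included iff both indices of t_k lie in a common cycle of \<pi>_{k+1}.\<close>
fun Fword :: "('a::finite \<Rightarrow> 'a \<Rightarrow> 'a \<Rightarrow> nat) \<Rightarrow> ('a \<Rightarrow> 'a) \<Rightarrow> 'a
    \<Rightarrow> ('n::finite \<times> 'n) list \<Rightarrow> ('n \<Rightarrow> 'n) \<Rightarrow> ('n \<Rightarrow> 'a) \<Rightarrow> int" where
  "Fword N dual one [] \<sigma> = delta (avec one)"
| "Fword N dual one ((i, j) # ts) \<sigma> =
     (let \<pi> = foldr (\<lambda>(i', j') p. transpose i' j' \<circ> p) ts \<sigma>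
      in amul N (if sameorb \<pi> i j then Omega dual one i j else delta (avec one))
                (Fword N dual one ts \<sigma>))"

text \<open>Elements: x \<sigma> b = coefficient of X^\<sigma>_b; valid elements are supported on
  pairs (\<sigma>, b) with \<sigma> a permutation and b \<sigma>-fixed.\<close>
definition valid_elem :: "(('n \<Rightarrow> 'n) \<Rightarrow> ('n \<Rightarrow> 'a) \<Rightarrow> int) \<Rightarrow> bool" where
  "valid_elem x \<longleftrightarrow> (\<forall>\<sigma> b. x \<sigma> b \<noteq> 0 \<longrightarrow> \<sigma> permutes UNIV \<and> sfixed \<sigma> b)"

definition Xb :: "('n \<Rightarrow> 'n) \<Rightarrow> ('n \<Rightarrow> 'a) \<Rightarrow> ('n \<Rightarrow> 'n) \<Rightarrow> ('n \<Rightarrow> 'a) \<Rightarrow> int" where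
  "Xb \<sigma> b = (\<lambda>\<tau> v. if \<tau> = \<sigma> \<and> v = b then 1 else 0)"

definition Xr :: "('n \<Rightarrow> 'n) \<Rightarrow> (('n \<Rightarrow> 'a) \<Rightarrow> int) \<Rightarrow> ('n \<Rightarrow> 'n) \<Rightarrow> ('n \<Rightarrow> 'a) \<Rightarrow> int" where
  "Xr \<sigma> r = (\<lambda>\<tau> v. if \<tau> = \<sigma> then r v else 0)"

definition is_deconf :: "('a::finite \<Rightarrow> 'a \<Rightarrow> 'a \<Rightarrow> nat) \<Rightarrow> 'a
    \<Rightarrow> (('n::finite \<Rightarrow> 'n) \<Rightarrow> ('n \<Rightarrow> 'a) \<Rightarrow> ('n \<Rightarrow> 'a) \<Rightarrow> int) \<Rightarrow> bool" where
  "is_deconf N one D \<longleftrightarrow> (\<forall>\<sigma> b. \<sigma> permutes UNIV \<and> sfixed \<sigma> b \<longrightarrow>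
      (\<forall>v. 0 \<le> D \<sigma> b v) \<and> rmul N \<sigma> (conf N one \<sigma> (D \<sigma> b)) (delta (avec one)) = delta b)"

definition bprod :: "('a::finite \<Rightarrow> 'a \<Rightarrow> 'a \<Rightarrow> nat) \<Rightarrow> ('a \<Rightarrow> 'a) \<Rightarrow> 'a
    \<Rightarrow> (('n::finite \<Rightarrow> 'n) \<Rightarrow> ('n \<Rightarrow> 'a) \<Rightarrow> ('n \<Rightarrow> 'a) \<Rightarrow> int) \<Rightarrow> (('n \<Rightarrow> 'n) \<Rightarrow> 'n list list)
    \<Rightarrow> ('n \<Rightarrow> 'n) \<Rightarrow> ('n \<Rightarrow> 'a) \<Rightarrow> ('n \<Rightarrow> 'n) \<Rightarrow> ('n \<Rightarrow> 'a)
    \<Rightarrow> ('n \<Rightarrow> 'n) \<Rightarrow> ('n \<Rightarrow> 'a) \<Rightarrow> int" where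
  "bprod N dual one D dec \<rho> a \<sigma> b =
    (if \<rho> = id \<and> \<sigma> = id then Xr id (amul N (delta a) (delta b))
     else if \<rho> = id then Xr \<sigma> (rmul N \<sigma> (conf N one \<sigma> (delta a)) (delta b))
     else if \<sigma> = id then Xr \<rho> (rmul N \<rho> (conf N one \<rho> (delta b)) (delta a))
     else Xr (\<rho> \<circ> \<sigma>) (rmul N (\<rho> \<circ> \<sigma>)
            (conf N one (\<rho> \<circ> \<sigma>)
               (amul N (amul N (D \<rho> a) (D \<sigma> b)) (Fword N dual one (transp_list (dec \<rho>)) \<sigma>)))
            (delta (avec one))))"

definition dmul :: "('a::finite \<Rightarrow> 'a \<Rightarrow> 'a \<Rightarrow> nat) \<Rightarrow> ('a \<Rightarrow> 'a) \<Rightarrow> 'a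
    \<Rightarrow> (('n::finite \<Rightarrow> 'n) \<Rightarrow> ('n \<Rightarrow> 'a) \<Rightarrow> ('n \<Rightarrow> 'a) \<Rightarrow> int) \<Rightarrow> (('n \<Rightarrow> 'n) \<Rightarrow> 'n list list)
    \<Rightarrow> (('n \<Rightarrow> 'n) \<Rightarrow> ('n \<Rightarrow> 'a) \<Rightarrow> int) \<Rightarrow> (('n \<Rightarrow> 'n) \<Rightarrow> ('n \<Rightarrow> 'a) \<Rightarrow> int)
    \<Rightarrow> ('n \<Rightarrow> 'n) \<Rightarrow> ('n \<Rightarrow> 'a) \<Rightarrow> int" where
  "dmul N dual one D dec x y = (\<lambda>\<tau> v.
     \<Sum>\<rho>\<in>perms. \<Sum>a\<in>{a. sfixed \<rho> a}. \<Sum>\<sigma>\<in>perms. \<Sum>b\<in>{b. sfixed \<sigma> b}.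
        x \<rho> a * y \<sigma> b * bprod N dual one D dec \<rho> a \<sigma> b \<tau> v)"

end

theory Submission
  imports Defs "HOL-Combinatorics.Orbits"
begin

(* The columns of the S-matrix are characters chi_x(a) = S(a,x) / S(1,x) of the fusion ring C
   (Verlinde formula). For a multilayer label y they give a character of the n-layer ring and,
   when y is constant on the orbits of tau, a character of R_tau; confinement intertwines the
   two. On F(rho, sigma) this character takes the value w(rho) w(sigma) / w(rho sigma), where
   w(pi) is the product of S(1, y_O) over the orbits O of pi, normalised to w(id) = 1: each
   transposition in the word of rho splits or joins an orbit of the current permutation, and it
   contributes an Omega factor exactly when it splits one. So the transform
   x |-> (tau |-> w(tau) * chi_{tau,y}(x_tau)) turns the defect fusion product into the
   convolution product of the monoid algebra of S_n, which is associative with unit delta_id,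
   and by unitarity of S the transforms at all labels y determine x. *)

lemma sum_fun_prod:
  fixes f :: "'n::finite \<Rightarrow> 'a::finite \<Rightarrow> 'c::comm_semiring_1"
  shows "(\<Sum>v\<in>UNIV. \<Prod>i\<in>UNIV. f i (v i)) = (\<Prod>i\<in>UNIV. \<Sum>c\<in>UNIV. f i c)"
  using prod_sum_PiE[of "UNIV::'n set" "\<lambda>_. UNIV::'a set" f] by simp

lemma sum_delta:
  fixes K :: "'b \<Rightarrow> 'c::ring_1"
  assumes "finite A" and "a \<in> A"
  shows "(\<Sum>v\<in>A. of_int (delta a v) * K v) = K a"
proof -
  have "(\<Sum>v\<in>A. of_int (delta a v) * K v) = (\<Sum>v\<in>A. if v = a then K v else 0)"
    by (rule sum.cong) (auto simp: delta_def)
  then show ?thesis using assms by simp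
qed

lemma prod_indicator:
  "finite A \<Longrightarrow> (\<Prod>a\<in>A. if P a then 1 else 0 :: 'c::comm_semiring_1) = (if \<forall>a\<in>A. P a then 1 else 0)"
  by (induction A rule: finite_induct) auto

lemma sum_if_eq_and:
  assumes "finite A" and "e \<in> A"
  shows "(\<Sum>x\<in>A. if e = x \<and> Q x then K x else 0) = (if Q e then K e else 0)"
proof -
  have "(\<Sum>x\<in>A. if e = x \<and> Q x then K x else 0) = (\<Sum>x\<in>A. if x = e then (if Q x then K x else 0) else 0)"
    by (rule sum.cong) auto
  then show ?thesis using assms by simp
qed

lemma sum_rotate3:
  "(\<Sum>a\<in>A. \<Sum>b\<in>B. \<Sum>c\<in>C. F a b c) = (\<Sum>b\<in>B. \<Sum>c\<in>C. \<Sum>a\<in>A. F a b c)"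
  by (subst sum.swap) (rule sum.cong[OF refl], rule sum.swap)

lemma sum_sum_if_mult:
  fixes f g P Q :: "'b \<Rightarrow> 'c::comm_semiring_1"
  shows "(\<Sum>a\<in>A. \<Sum>b\<in>B. f a * g b * (if c then P a * Q b else 0))
    = (if c then (\<Sum>a\<in>A. f a * P a) * (\<Sum>b\<in>B. g b * Q b) else 0)"
  by (simp add: sum_product mult_ac)

section \<open>Orbits of a permutation\<close>

lemma permutes_UNIV_permutation: "(\<pi> :: 'n::finite \<Rightarrow> 'n) permutes UNIV \<Longrightarrow> permutation \<pi>"
  unfolding permutation_permutes using finite_UNIV by blast

lemma porb_self: "k \<in> porb \<pi> k"
  unfolding porb_def by (auto intro: exI[of _ 0])

lemma porb_funpow: "x \<in> porb \<pi> k \<Longrightarrow> (\<pi> ^^ m) x \<in> porb \<pi> k"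
proof -
  assume "x \<in> porb \<pi> k"
  then obtain j where "x = (\<pi> ^^ j) k" unfolding porb_def by auto
  then have "(\<pi> ^^ m) x = (\<pi> ^^ (m + j)) k" by (simp add: funpow_add)
  then show ?thesis unfolding porb_def by blast
qed

lemma porb_step: "x \<in> porb \<pi> k \<Longrightarrow> \<pi> x \<in> porb \<pi> k"
  using porb_funpow[where m=1] by simp

lemma porb_subset:
  assumes "\<And>x. x \<in> A \<Longrightarrow> \<pi> x \<in> A" and "k \<in> A"
  shows "porb \<pi> k \<subseteq> A"
proof
  fix x assume "x \<in> porb \<pi> k"
  then obtain m where "x = (\<pi> ^^ m) k" unfolding porb_def by auto
  moreover have "(\<pi> ^^ m) k \<in> A" for m by (induction m) (use assms in auto)
  ultimately show "x \<in> A" by simp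
qed

lemma porb_eq_orbit: "(\<pi> :: 'n::finite \<Rightarrow> 'n) permutes UNIV \<Longrightarrow> porb \<pi> k = orbit \<pi> k"
  by (simp add: porb_def orbit_altdef_permutation permutes_UNIV_permutation)

lemma porb_eqI:
  assumes "(\<pi> :: 'n::finite \<Rightarrow> 'n) permutes UNIV" and "x \<in> porb \<pi> k"
  shows "porb \<pi> x = porb \<pi> k"
  using assms orbit_cyclic_eq3[OF cyclic_on_orbit'[OF permutes_UNIV_permutation]]
  by (simp add: porb_eq_orbit)

lemma porb_disjoint:
  assumes "(\<pi> :: 'n::finite \<Rightarrow> 'n) permutes UNIV" and "porb \<pi> x \<noteq> porb \<pi> k"
  shows "porb \<pi> x \<inter> porb \<pi> k = {}"
  using assms porb_eqI[OF assms(1)] by blast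

lemma sameorb_iff: "sameorb \<pi> i j \<longleftrightarrow> j \<in> porb \<pi> i"
  unfolding sameorb_def porb_def by (simp add: eq_commute)

lemma orep_porb: "orep (porb \<pi> k) \<in> porb \<pi> k"
  unfolding orep_def using porb_self by (rule someI)

lemma porb_orep:
  assumes "(\<pi> :: 'n::finite \<Rightarrow> 'n) permutes UNIV" and "O' \<in> orbs \<pi>"
  shows "porb \<pi> (orep O') = O'"
proof -
  obtain k where "O' = porb \<pi> k" using assms(2) unfolding orbs_def by blast
  then show ?thesis using porb_eqI[OF assms(1) orep_porb] by simp
qed

lemma prod_orbs:
  fixes h :: "'n::finite \<Rightarrow> 'c::comm_monoid_mult"
  assumes "\<pi> permutes UNIV"
  shows "(\<Prod>O'\<in>orbs \<pi>. \<Prod>k\<in>O'. h k) = (\<Prod>k\<in>UNIV. h k)"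
proof -
  have disj: "\<forall>A\<in>orbs \<pi>. \<forall>B\<in>orbs \<pi>. A \<noteq> B \<longrightarrow> A \<inter> B = {}"
    unfolding orbs_def using porb_disjoint[OF assms] by blast
  have "(\<Prod>O'\<in>orbs \<pi>. \<Prod>k\<in>O'. h k) = prod h (\<Union>(orbs \<pi>))"
    using prod.Union_disjoint[OF _ disj, of h] by (simp add: comp_def)
  also have "\<Union>(orbs \<pi>) = UNIV"
    using porb_self[of _ \<pi>] by (auto simp: orbs_def)
  finally show ?thesis .
qed

lemma prod_orbs_id:
  fixes h :: "'n::finite \<Rightarrow> 'c::comm_monoid_mult"
  shows "(\<Prod>O'\<in>orbs id. h (orep O')) = (\<Prod>k\<in>UNIV. h k)"
proof -
  have "porb id k = {k}" for k :: 'n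
    unfolding porb_def by simp
  then have "orbs (id :: 'n \<Rightarrow> 'n) = (\<lambda>k. {k}) ` UNIV" and "orep {k} = k" for k :: 'n
    unfolding orbs_def using orep_porb[of id k] by auto
  then show ?thesis
    by (simp add: prod.reindex inj_on_def)
qed

lemma olist_distinct_set: "finite O' \<Longrightarrow> distinct (olist O') \<and> set (olist O') = O'"
  unfolding olist_def by (rule someI_ex) (metis finite_distinct_list)

lemma sfixed_iff_comp: "sfixed \<pi> y \<longleftrightarrow> y \<circ> \<pi> = y"
  unfolding sfixed_def by (auto simp: fun_eq_iff)

lemma sfixed_id: "sfixed id y"
  by (simp add: sfixed_def)

lemma sfixed_avec: "sfixed \<pi> (avec one)"
  unfolding sfixed_def avec_def by simp

lemma sfixed_comp: "sfixed \<rho> y \<Longrightarrow> sfixed \<sigma> y \<Longrightarrow> sfixed (\<rho> \<circ> \<sigma>) y"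
  unfolding sfixed_def by simp

lemma sfixed_comp_right: "sfixed (\<rho> \<circ> \<sigma>) y \<Longrightarrow> sfixed \<rho> y \<Longrightarrow> sfixed \<sigma> y"
  unfolding sfixed_def by (metis comp_apply)

lemma sfixed_porb: "sfixed \<pi> y \<Longrightarrow> x \<in> porb \<pi> k \<Longrightarrow> y x = y k"
proof -
  assume y: "sfixed \<pi> y" and "x \<in> porb \<pi> k"
  then obtain m where "x = (\<pi> ^^ m) k" unfolding porb_def by auto
  moreover have "y ((\<pi> ^^ m) k) = y k" for m by (induction m) (use y in \<open>auto simp: sfixed_def\<close>)
  ultimately show ?thesis by simp
qed

lemma sfixed_orep:
  assumes "sfixed \<pi> y" and "O' \<in> orbs \<pi>" and "x \<in> O'"
  shows "y x = y (orep O')"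
proof -
  obtain k where "O' = porb \<pi> k" using assms(2) unfolding orbs_def by blast
  then show ?thesis using sfixed_porb[OF assms(1)] assms(3) orep_porb[of \<pi> k] by simp
qed

lemma sfixed_eq_iff:
  assumes "(\<pi> :: 'n::finite \<Rightarrow> 'n) permutes UNIV" and "sfixed \<pi> b" and "sfixed \<pi> b'"
  shows "b = b' \<longleftrightarrow> (\<forall>O'\<in>orbs \<pi>. b (orep O') = b' (orep O'))"
proof
  assume eq: "\<forall>O'\<in>orbs \<pi>. b (orep O') = b' (orep O')"
  show "b = b'"
  proof
    fix k
    have "porb \<pi> k \<in> orbs \<pi>"
      unfolding orbs_def by (rule rangeI)
    then show "b k = b' k"
      using eq sfixed_orep[OF assms(2) _ porb_self] sfixed_orep[OF assms(3) _ porb_self] by simp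
  qed
qed simp

text \<open>A \<pi>-fixed label is the same as a free choice of one label per orbit.\<close>

lemma sum_sfixed_prod:
  fixes g :: "'n::finite set \<Rightarrow> 'a::finite \<Rightarrow> 'c::comm_semiring_1"
  assumes "\<pi> permutes UNIV"
  shows "(\<Sum>b\<in>{b::'n \<Rightarrow> 'a. sfixed \<pi> b}. \<Prod>O'\<in>orbs \<pi>. g O' (b (orep O')))
       = (\<Prod>O'\<in>orbs \<pi>. \<Sum>c\<in>UNIV. g O' c)"
proof -
  have "(\<Prod>O'\<in>orbs \<pi>. \<Sum>c\<in>UNIV. g O' c)
      = (\<Sum>f\<in>PiE (orbs \<pi>) (\<lambda>_. UNIV). \<Prod>O'\<in>orbs \<pi>. g O' (f O'))"
    by (rule prod_sum_PiE) auto
  also have "\<dots> = (\<Sum>b\<in>{b::'n \<Rightarrow> 'a. sfixed \<pi> b}. \<Prod>O'\<in>orbs \<pi>. g O' (b (orep O')))"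
  proof (rule sum.reindex_bij_witness[of _ "\<lambda>b. restrict (\<lambda>O'. b (orep O')) (orbs \<pi>)"
        "\<lambda>f k. f (porb \<pi> k)"])
    fix f :: "'n set \<Rightarrow> 'a" assume f: "f \<in> PiE (orbs \<pi>) (\<lambda>_. UNIV)"
    show "restrict (\<lambda>O'. f (porb \<pi> (orep O'))) (orbs \<pi>) = f"
    proof
      fix O' show "restrict (\<lambda>O'. f (porb \<pi> (orep O'))) (orbs \<pi>) O' = f O'"
        using PiE_arb[OF f] by (cases "O' \<in> orbs \<pi>") (simp_all add: porb_orep[OF assms])
    qed
    have "porb \<pi> (\<pi> k) = porb \<pi> k" for k
      using porb_eqI[OF assms porb_step[OF porb_self]] .
    then show "(\<lambda>k. f (porb \<pi> k)) \<in> {b. sfixed \<pi> b}"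
      unfolding sfixed_def by simp
    show "(\<Prod>O'\<in>orbs \<pi>. g O' (f (porb \<pi> (orep O')))) = (\<Prod>O'\<in>orbs \<pi>. g O' (f O'))"
      by (rule prod.cong) (auto simp: porb_orep[OF assms])
  next
    fix b :: "'n \<Rightarrow> 'a" assume "b \<in> {b. sfixed \<pi> b}"
    then have "b (orep (porb \<pi> k)) = b k" for k
      using sfixed_orep[of \<pi> b "porb \<pi> k" k] porb_self[of k \<pi>] by (simp add: orbs_def)
    then show "(\<lambda>k. restrict (\<lambda>O'. b (orep O')) (orbs \<pi>) (porb \<pi> k)) = b"
      by (simp add: orbs_def)
  qed (simp add: restrict_PiE_iff)
  finally show ?thesis by simp
qed

section \<open>Composing a permutation with a transposition\<close>

lemma transpose_comp_permutes:
  "\<pi> permutes UNIV \<Longrightarrow> (transpose i j \<circ> \<pi>) permutes UNIV"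
  by (rule permutes_compose) (auto intro: permutes_swap_id)

lemma transpose_in: "i \<in> A \<Longrightarrow> j \<in> A \<Longrightarrow> x \<in> A \<Longrightarrow> transpose i j x \<in> A"
  unfolding transpose_def by simp

lemma comp_transpose_eq: "y i = y j \<Longrightarrow> y \<circ> transpose i j = y"
  by (auto simp: fun_eq_iff transpose_def)

lemma sfixed_transpose_comp_iff:
  "y i = y j \<Longrightarrow> sfixed (transpose i j \<circ> \<pi>) y \<longleftrightarrow> sfixed \<pi> y"
  unfolding sfixed_iff_comp by (simp add: comp_assoc[symmetric] comp_transpose_eq)

text \<open>Until the \<pi>-walk from i returns to i or reaches j, the walks of \<pi> and of
  (i j) \<circ> \<pi> from i agree; at that step the transposition swaps the target. So (i j) \<circ> \<pi>
  joins the orbits of i and j if they differ, and splits their common orbit otherwise.\<close>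

lemma transpose_comp_funpow:
  assumes avoid: "\<And>k. 0 < k \<Longrightarrow> k < m \<Longrightarrow> (\<pi> ^^ k) i \<noteq> i \<and> (\<pi> ^^ k) i \<noteq> j"
  shows "k < m \<Longrightarrow> ((transpose i j \<circ> \<pi>) ^^ k) i = (\<pi> ^^ k) i"
proof (induction k)
  case (Suc k)
  have "((transpose i j \<circ> \<pi>) ^^ k) i = (\<pi> ^^ k) i"
    by (rule Suc.IH) (use Suc.prems in simp)
  then have "((transpose i j \<circ> \<pi>) ^^ Suc k) i = transpose i j ((\<pi> ^^ Suc k) i)"
    by simp
  also have "\<dots> = (\<pi> ^^ Suc k) i" using avoid[of "Suc k"] Suc.prems by simp
  finally show ?case .
qed simp

lemma transpose_comp_funpow_last:
  assumes avoid: "\<And>k. 0 < k \<Longrightarrow> k < m \<Longrightarrow> (\<pi> ^^ k) i \<noteq> i \<and> (\<pi> ^^ k) i \<noteq> j"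
    and "0 < m"
  shows "((transpose i j \<circ> \<pi>) ^^ m) i = transpose i j ((\<pi> ^^ m) i)"
proof -
  obtain m' where m': "m = Suc m'" using \<open>0 < m\<close> by (cases m) auto
  then have "((transpose i j \<circ> \<pi>) ^^ m') i = (\<pi> ^^ m') i"
    using transpose_comp_funpow[OF avoid] by simp
  then show ?thesis unfolding m' by simp
qed

lemma sameorb_transpose_comp_join:
  fixes \<pi> :: "'n::finite \<Rightarrow> 'n"
  assumes "\<pi> permutes UNIV" and "\<not> sameorb \<pi> i j"
  shows "sameorb (transpose i j \<circ> \<pi>) i j"
proof -
  let ?m = "least_power \<pi> i"
  have m: "(\<pi> ^^ ?m) i = i" "0 < ?m"
    using least_power_of_permutation[OF permutes_UNIV_permutation[OF assms(1)]] by auto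
  have "(\<pi> ^^ k) i \<noteq> i \<and> (\<pi> ^^ k) i \<noteq> j" if "0 < k" "k < ?m" for k
    using least_power_le[where f=\<pi> and n=k and x=i] that assms(2) unfolding sameorb_def by auto
  then have "((transpose i j \<circ> \<pi>) ^^ ?m) i = j"
    using transpose_comp_funpow_last[where m="?m" and \<pi>=\<pi> and i=i and j=j] m by simp
  then show ?thesis unfolding sameorb_def by blast
qed

lemma sameorb_transpose_comp_split:
  assumes "i \<noteq> j" and "sameorb \<pi> i j"
  shows "\<not> sameorb (transpose i j \<circ> \<pi>) i j"
proof
  let ?f = "transpose i j \<circ> \<pi>" and ?m = "funpow_dist \<pi> i j"
  have m: "(\<pi> ^^ ?m) i = j"
    using assms(2) unfolding sameorb_def funpow_dist_def by (rule LeastI_ex)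
  have nj: "(\<pi> ^^ k) i \<noteq> j" if "k < ?m" for k
    using funpow_dist_least that .
  have "0 < ?m" using m assms(1) by (cases ?m) auto
  have ni: "(\<pi> ^^ k) i \<noteq> i" if "0 < k" "k < ?m" for k
  proof
    assume "(\<pi> ^^ k) i = i"
    then have "(\<pi> ^^ (?m - k)) i = (\<pi> ^^ (?m - k + k)) i"
      by (simp only: funpow_add comp_apply)
    then have "(\<pi> ^^ (?m - k)) i = j" using that m by simp
    then show False using nj[of "?m - k"] that by simp
  qed
  have walk: "(?f ^^ k) i = (\<pi> ^^ k) i" if "k < ?m" for k
    using transpose_comp_funpow[where m="?m" and \<pi>=\<pi> and i=i and j=j] ni nj that by blast
  have "(?f ^^ ?m) i = i"
    using transpose_comp_funpow_last[where m="?m" and \<pi>=\<pi> and i=i and j=j] ni nj m \<open>0 < ?m\<close> by simp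
  assume "sameorb ?f i j"
  then obtain n where "(?f ^^ n) i = j" unfolding sameorb_def by blast
  then have "(?f ^^ (n mod ?m)) i = j"
    using funpow_mod_eq[of ?m ?f i n] \<open>(?f ^^ ?m) i = i\<close> by simp
  then show False
    using walk[of "n mod ?m"] nj[of "n mod ?m"] \<open>0 < ?m\<close> by simp
qed

lemma porb_transpose_comp_outside:
  fixes \<pi> :: "'n::finite \<Rightarrow> 'n"
  assumes "\<pi> permutes UNIV" and "i \<in> porb \<pi> k" "j \<in> porb \<pi> k" "x \<notin> porb \<pi> k"
  shows "porb (transpose i j \<circ> \<pi>) x = porb \<pi> x"
proof -
  have "porb \<pi> x \<inter> porb \<pi> k = {}"
    using porb_disjoint[OF assms(1)] porb_self[of x \<pi>] assms(4) by blast
  then have "(\<pi> ^^ n) x \<notin> {i, j}" for n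
    using porb_funpow[OF porb_self, where k=x and \<pi>=\<pi> and m=n] assms(2,3) by blast
  then have "((transpose i j \<circ> \<pi>) ^^ n) x = (\<pi> ^^ n) x" for n
  proof (induction n)
    case (Suc n)
    then show ?case using \<open>(\<pi> ^^ Suc n) x \<notin> {i, j}\<close> by simp
  qed simp
  then show ?thesis unfolding porb_def by simp
qed

lemma porb_transpose_comp_split:
  fixes \<pi> :: "'n::finite \<Rightarrow> 'n"
  assumes "i \<noteq> j" and "sameorb \<pi> i j"
  defines "f \<equiv> transpose i j \<circ> \<pi>"
  shows "porb f i \<union> porb f j = porb \<pi> i" and "porb f i \<noteq> porb f j"
proof -
  have i: "i \<in> porb \<pi> i" and j: "j \<in> porb \<pi> i"
    using porb_self assms(2) by (auto simp: sameorb_iff)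
  have "f x \<in> porb \<pi> i" if "x \<in> porb \<pi> i" for x
    using transpose_in[OF i j porb_step[OF that]] by (simp add: f_def)
  then have "porb f i \<subseteq> porb \<pi> i" and "porb f j \<subseteq> porb \<pi> i"
    using porb_subset i j by metis+
  moreover have "\<pi> x \<in> porb f i \<union> porb f j" if "x \<in> porb f i \<union> porb f j" for x
  proof -
    have "f x \<in> porb f i \<union> porb f j"
      using that porb_step[of x f] by blast
    then have "transpose i j (f x) \<in> porb f i \<union> porb f j"
      by (rule transpose_in[rotated 2]) (simp_all add: porb_self)
    then show ?thesis by (simp add: f_def)
  qed
  then have "porb \<pi> i \<subseteq> porb f i \<union> porb f j"
    using porb_self[of i f] by (intro porb_subset) auto
  ultimately show "porb f i \<union> porb f j = porb \<pi> i" by blast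
  have "j \<notin> porb f i"
    using sameorb_transpose_comp_split[OF assms(1,2)] by (simp add: f_def sameorb_iff)
  then show "porb f i \<noteq> porb f j"
    using porb_self[of j f] by auto
qed

lemma orbs_transpose_comp_split:
  fixes \<pi> :: "'n::finite \<Rightarrow> 'n"
  assumes perm: "\<pi> permutes UNIV" and "i \<noteq> j" and "sameorb \<pi> i j"
  defines "f \<equiv> transpose i j \<circ> \<pi>"
  shows "orbs f = insert (porb f i) (insert (porb f j) (orbs \<pi> - {porb \<pi> i}))"
proof -
  note split = porb_transpose_comp_split[OF assms(2,3), folded f_def]
  have fperm: "f permutes UNIV"
    unfolding f_def by (rule transpose_comp_permutes[OF perm])
  have j: "j \<in> porb \<pi> i"
    using assms(3) by (simp add: sameorb_iff)
  have "porb f x \<in> insert (porb f i) (insert (porb f j) (orbs \<pi> - {porb \<pi> i}))" for x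
  proof (cases "x \<in> porb \<pi> i")
    case True
    then show ?thesis using split(1) porb_eqI[OF fperm] by blast
  next
    case False
    then have "porb f x = porb \<pi> x" and "porb \<pi> x \<noteq> porb \<pi> i"
      using porb_transpose_comp_outside[OF perm porb_self j] porb_self[of x \<pi>]
      by (auto simp: f_def)
    then show ?thesis by (simp add: orbs_def)
  qed
  moreover have "porb \<pi> x \<in> orbs f" if "porb \<pi> x \<noteq> porb \<pi> i" for x
  proof -
    have "x \<notin> porb \<pi> i"
      using that porb_eqI[OF perm] by blast
    then have "porb \<pi> x = porb f x"
      using porb_transpose_comp_outside[OF perm porb_self j] by (simp add: f_def)
    then show ?thesis by (simp add: orbs_def)
  qed
  ultimately show ?thesis
    by (auto simp: orbs_def)
qed

definition orbit_weight :: "('a \<Rightarrow> 'b::field) \<Rightarrow> ('n \<Rightarrow> 'a) \<Rightarrow> ('n::finite \<Rightarrow> 'n) \<Rightarrow> 'b" where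
  "orbit_weight s y \<pi> = (\<Prod>O'\<in>orbs \<pi>. s (y (orep O'))) / (\<Prod>k\<in>UNIV. s (y k))"

lemma orbit_weight_nonzero: "(\<And>a. s a \<noteq> 0) \<Longrightarrow> orbit_weight s y \<pi> \<noteq> 0"
  unfolding orbit_weight_def by simp

lemma orbit_weight_id: "(\<And>a. s a \<noteq> 0) \<Longrightarrow> orbit_weight s y id = 1"
  unfolding orbit_weight_def prod_orbs_id[of "\<lambda>k. s (y k)"] by simp

lemma orbit_weight_transpose_comp_split:
  fixes \<pi> :: "'n::finite \<Rightarrow> 'n"
  assumes perm: "\<pi> permutes UNIV" and "i \<noteq> j" and "sameorb \<pi> i j" and "sfixed \<pi> y"
  shows "orbit_weight s y (transpose i j \<circ> \<pi>) = orbit_weight s y \<pi> * s (y i)"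
proof -
  let ?f = "transpose i j \<circ> \<pi>" and ?h = "\<lambda>O'. s (y (orep O'))"
  let ?A = "porb ?f i" and ?B = "porb ?f j" and ?O = "porb \<pi> i"
  let ?R = "orbs \<pi> - {?O}"
  note split = porb_transpose_comp_split[OF assms(2,3)]
  have label: "y x = y i" if "x \<in> ?O" for x
    using sfixed_porb[OF assms(4) that] .
  have "orep ?A \<in> ?O" "orep ?B \<in> ?O"
    using orep_porb[of ?f i] orep_porb[of ?f j] split(1) by blast+
  then have "?h ?A = s (y i)" "?h ?B = s (y i)" "?h ?O = s (y i)"
    using label orep_porb[of \<pi> i] by simp_all
  moreover have "?A \<notin> ?R" "?B \<notin> ?R"
    using split(1) porb_self[of i ?f] porb_self[of j ?f] porb_disjoint[OF perm, of _ i]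
    unfolding orbs_def by blast+
  moreover have "?O \<in> orbs \<pi>"
    unfolding orbs_def by (rule rangeI)
  ultimately have "(\<Prod>O'\<in>orbs ?f. ?h O') = (\<Prod>O'\<in>orbs \<pi>. ?h O') * s (y i)"
    unfolding orbs_transpose_comp_split[OF assms(1-3)]
    using split(2) prod.remove[of "orbs \<pi>" ?O ?h] by (simp add: ac_simps)
  then show ?thesis
    unfolding orbit_weight_def by simp
qed

lemma orbit_weight_transpose_comp:
  fixes \<pi> :: "'n::finite \<Rightarrow> 'n"
  assumes perm: "\<pi> permutes UNIV" and "i \<noteq> j" and "sfixed \<pi> y" and "y i = y j"
    and "\<And>a. s a \<noteq> 0"
  shows "orbit_weight s y (transpose i j \<circ> \<pi>) =
           (if sameorb \<pi> i j then orbit_weight s y \<pi> * s (y i) else orbit_weight s y \<pi> / s (y i))"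
proof (cases "sameorb \<pi> i j")
  case True
  then show ?thesis using orbit_weight_transpose_comp_split[OF assms(1-2) True assms(3)] by simp
next
  case False
  let ?f = "transpose i j \<circ> \<pi>"
  have "orbit_weight s y (transpose i j \<circ> ?f) = orbit_weight s y ?f * s (y i)"
  proof (rule orbit_weight_transpose_comp_split)
    show "?f permutes UNIV" by (rule transpose_comp_permutes[OF perm])
    show "sameorb ?f i j" by (rule sameorb_transpose_comp_join[OF perm False])
    show "sfixed ?f y" using assms(3,4) by (simp add: sfixed_transpose_comp_iff)
  qed fact
  moreover have "transpose i j \<circ> ?f = \<pi>"
    by (simp add: comp_assoc[symmetric])
  ultimately show ?thesis using False assms(5) by (simp add: field_simps)
qed

text \<open>The permutation \<pi> (that is, \<pi>_{k+1}) bound in the definition of Fword.\<close>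

definition word_comp :: "('n \<times> 'n) list \<Rightarrow> ('n \<Rightarrow> 'n) \<Rightarrow> 'n \<Rightarrow> 'n" where
  "word_comp ts \<sigma> = foldr (\<lambda>(i, j) p. transpose i j \<circ> p) ts \<sigma>"

lemma word_comp_Nil [simp]: "word_comp [] \<sigma> = \<sigma>"
  unfolding word_comp_def by simp

lemma word_comp_Cons [simp]: "word_comp ((i, j) # ts) \<sigma> = transpose i j \<circ> word_comp ts \<sigma>"
  unfolding word_comp_def by simp

lemma word_comp_append: "word_comp (ts @ us) \<sigma> = word_comp ts (word_comp us \<sigma>)"
  unfolding word_comp_def by simp

lemma word_comp_eq_comp: "word_comp ts \<sigma> = word_comp ts id \<circ> \<sigma>"
  by (induction ts) (auto simp: comp_assoc)

lemma word_comp_permutes: "\<sigma> permutes UNIV \<Longrightarrow> word_comp ts \<sigma> permutes UNIV"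
  by (induction ts) (auto intro: transpose_comp_permutes)

lemma Fword_Cons:
  "Fword N dual one ((i, j) # ts) \<sigma> =
     amul N (if sameorb (word_comp ts \<sigma>) i j then Omega dual one i j else delta (avec one))
       (Fword N dual one ts \<sigma>)"
  unfolding word_comp_def by (simp add: Let_def)

definition word_support :: "('n \<times> 'n) list \<Rightarrow> 'n set" where
  "word_support ts = (\<Union>(i, j)\<in>set ts. {i, j})"

lemma word_support_Nil [simp]: "word_support [] = {}"
  unfolding word_support_def by simp

lemma word_support_Cons [simp]:
  "word_support ((i, j) # ts) = insert i (insert j (word_support ts))"
  unfolding word_support_def by auto

lemma word_support_append [simp]: "word_support (ts @ us) = word_support ts \<union> word_support us"
  unfolding word_support_def by auto

text \<open>For the word of a cycle decomposition, the first point of each letter is fixed by the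
  rest of the word; this is why F(\<rho>, id) has no \<Omega> factor.\<close>

fun fresh_heads :: "('n \<times> 'n) list \<Rightarrow> bool" where
  "fresh_heads [] = True"
| "fresh_heads ((i, j) # ts) \<longleftrightarrow> i \<noteq> j \<and> i \<notin> word_support ts \<and> fresh_heads ts"

lemma fresh_heads_append:
  "fresh_heads ts \<Longrightarrow> fresh_heads us \<Longrightarrow> (\<forall>(i, j)\<in>set ts. i \<notin> word_support us)
    \<Longrightarrow> fresh_heads (ts @ us)"
  by (induction ts rule: fresh_heads.induct) auto

lemma fresh_heads_neq: "fresh_heads ts \<Longrightarrow> (i, j) \<in> set ts \<Longrightarrow> i \<noteq> j"
  by (induction ts rule: fresh_heads.induct) auto

lemma word_support_cycle: "word_support (zip c (tl c)) \<subseteq> set c"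
  by (induction c rule: cycle_of_list.induct) (auto simp: word_support_def)

lemma fresh_heads_cycle: "distinct c \<Longrightarrow> fresh_heads (zip c (tl c))"
proof (induction c rule: cycle_of_list.induct)
  case (1 i j cs)
  then show ?case using word_support_cycle[of "j # cs"] by auto
qed auto

lemma word_support_transp_list: "word_support (transp_list cs) \<subseteq> set (concat cs)"
  using word_support_cycle unfolding transp_list_def word_support_def by fastforce

lemma fresh_heads_transp_list: "distinct (concat cs) \<Longrightarrow> fresh_heads (transp_list cs)"
proof (induction cs)
  case (Cons c cs)
  have "transp_list (c # cs) = zip c (tl c) @ transp_list cs"
    unfolding transp_list_def by simp
  moreover have "\<forall>(i, j)\<in>set (zip c (tl c)). i \<notin> word_support (transp_list cs)"
    using Cons.prems word_support_transp_list[of cs] by (auto dest: set_zip_leftD)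
  ultimately show ?case
    using Cons fresh_heads_cycle[of c] by (simp add: fresh_heads_append)
qed (simp add: transp_list_def)

lemma cycle_of_list_word_comp: "cycle_of_list c = word_comp (zip c (tl c)) id"
  by (induction c rule: cycle_of_list.induct) auto

lemma cycle_product_word_comp:
  "foldr (\<lambda>c p. cycle_of_list c \<circ> p) cs id = word_comp (transp_list cs) id"
proof (induction cs)
  case (Cons c cs)
  have "foldr (\<lambda>c p. cycle_of_list c \<circ> p) (c # cs) id
      = word_comp (zip c (tl c)) id \<circ> word_comp (transp_list cs) id"
    unfolding foldr.simps comp_apply Cons.IH by (simp only: cycle_of_list_word_comp)
  also have "\<dots> = word_comp (zip c (tl c) @ transp_list cs) id"
    by (simp only: word_comp_append word_comp_eq_comp[of _ "word_comp _ id"])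
  also have "zip c (tl c) @ transp_list cs = transp_list (c # cs)"
    unfolding transp_list_def by simp
  finally show ?case .
qed (simp add: transp_list_def)

lemma is_cycle_decomp_word_comp:
  assumes "is_cycle_decomp \<rho> cs"
  shows "\<rho> = word_comp (transp_list cs) id" and "fresh_heads (transp_list cs)"
  using assms fresh_heads_transp_list unfolding is_cycle_decomp_def cycle_product_word_comp
  by auto

lemma word_comp_fixes: "i \<notin> word_support ts \<Longrightarrow> word_comp ts id i = i"
  by (induction ts) auto

lemma comp_word_comp_eq: "\<forall>(i, j)\<in>set ts. y i = y j \<Longrightarrow> y \<circ> word_comp ts id = y"
  by (induction ts) (auto simp: comp_assoc[symmetric] comp_transpose_eq)

section \<open>Convolution over a monoid of functions\<close>

definition comp_conv ::
    "('b \<Rightarrow> 'b) set \<Rightarrow> (('b \<Rightarrow> 'b) \<Rightarrow> 'c::comm_semiring_1) \<Rightarrow> (('b \<Rightarrow> 'b) \<Rightarrow> 'c) \<Rightarrow> ('b \<Rightarrow> 'b) \<Rightarrow> 'c"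
  where "comp_conv P f g \<tau> = (\<Sum>\<rho>\<in>P. \<Sum>\<sigma>\<in>P. if \<rho> \<circ> \<sigma> = \<tau> then f \<rho> * g \<sigma> else 0)"

lemma comp_conv_assoc_left:
  assumes "finite P" and closed: "\<And>\<rho> \<sigma>. \<rho> \<in> P \<Longrightarrow> \<sigma> \<in> P \<Longrightarrow> \<rho> \<circ> \<sigma> \<in> P"
  shows "comp_conv P (comp_conv P f g) h \<tau>
    = (\<Sum>\<rho>\<in>P. \<Sum>\<sigma>\<in>P. \<Sum>\<gamma>\<in>P. if \<rho> \<circ> \<sigma> \<circ> \<gamma> = \<tau> then f \<rho> * g \<sigma> * h \<gamma> else 0)"
proof -
  let ?T = "\<lambda>\<rho> \<sigma> \<gamma> \<rho>'. if \<rho> \<circ> \<sigma> = \<rho>' \<and> \<rho>' \<circ> \<gamma> = \<tau> then f \<rho> * g \<sigma> * h \<gamma> else 0"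
  have "comp_conv P (comp_conv P f g) h \<tau> = (\<Sum>\<rho>'\<in>P. \<Sum>\<gamma>\<in>P. \<Sum>\<rho>\<in>P. \<Sum>\<sigma>\<in>P. ?T \<rho> \<sigma> \<gamma> \<rho>')"
    unfolding comp_conv_def
    by (intro sum.cong refl) (auto simp: sum_distrib_right intro!: sum.cong)
  also have "\<dots> = (\<Sum>\<gamma>\<in>P. \<Sum>\<rho>\<in>P. \<Sum>\<sigma>\<in>P. \<Sum>\<rho>'\<in>P. ?T \<rho> \<sigma> \<gamma> \<rho>')"
    by (rule trans[OF sum_rotate3]) (rule sum.cong[OF refl], rule sum.cong[OF refl], rule sum.swap)
  also have "\<dots> = (\<Sum>\<rho>\<in>P. \<Sum>\<sigma>\<in>P. \<Sum>\<gamma>\<in>P. \<Sum>\<rho>'\<in>P. ?T \<rho> \<sigma> \<gamma> \<rho>')"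
    by (rule sum_rotate3)
  also have "\<dots> = (\<Sum>\<rho>\<in>P. \<Sum>\<sigma>\<in>P. \<Sum>\<gamma>\<in>P. if \<rho> \<circ> \<sigma> \<circ> \<gamma> = \<tau> then f \<rho> * g \<sigma> * h \<gamma> else 0)"
    using assms by (intro sum.cong refl) (simp add: sum_if_eq_and)
  finally show ?thesis .
qed

lemma comp_conv_assoc_right:
  assumes "finite P" and closed: "\<And>\<rho> \<sigma>. \<rho> \<in> P \<Longrightarrow> \<sigma> \<in> P \<Longrightarrow> \<rho> \<circ> \<sigma> \<in> P"
  shows "comp_conv P f (comp_conv P g h) \<tau>
    = (\<Sum>\<rho>\<in>P. \<Sum>\<sigma>\<in>P. \<Sum>\<gamma>\<in>P. if \<rho> \<circ> (\<sigma> \<circ> \<gamma>) = \<tau> then f \<rho> * g \<sigma> * h \<gamma> else 0)"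
proof -
  let ?T = "\<lambda>\<rho> \<sigma> \<gamma> \<sigma>'. if \<sigma> \<circ> \<gamma> = \<sigma>' \<and> \<rho> \<circ> \<sigma>' = \<tau> then f \<rho> * g \<sigma> * h \<gamma> else 0"
  have "comp_conv P f (comp_conv P g h) \<tau> = (\<Sum>\<rho>\<in>P. \<Sum>\<sigma>'\<in>P. \<Sum>\<sigma>\<in>P. \<Sum>\<gamma>\<in>P. ?T \<rho> \<sigma> \<gamma> \<sigma>')"
    unfolding comp_conv_def
    by (intro sum.cong refl) (auto simp: sum_distrib_left mult.assoc intro!: sum.cong)
  also have "\<dots> = (\<Sum>\<rho>\<in>P. \<Sum>\<sigma>\<in>P. \<Sum>\<gamma>\<in>P. \<Sum>\<sigma>'\<in>P. ?T \<rho> \<sigma> \<gamma> \<sigma>')"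
    by (rule sum.cong[OF refl], rule sum_rotate3)
  also have "\<dots> = (\<Sum>\<rho>\<in>P. \<Sum>\<sigma>\<in>P. \<Sum>\<gamma>\<in>P. if \<rho> \<circ> (\<sigma> \<circ> \<gamma>) = \<tau> then f \<rho> * g \<sigma> * h \<gamma> else 0)"
    using assms by (intro sum.cong refl) (simp add: sum_if_eq_and)
  finally show ?thesis .
qed

lemma comp_conv_assoc:
  assumes "finite P" and "\<And>\<rho> \<sigma>. \<rho> \<in> P \<Longrightarrow> \<sigma> \<in> P \<Longrightarrow> \<rho> \<circ> \<sigma> \<in> P"
  shows "comp_conv P (comp_conv P f g) h = comp_conv P f (comp_conv P g h)"
proof
  fix \<tau>
  show "comp_conv P (comp_conv P f g) h \<tau> = comp_conv P f (comp_conv P g h) \<tau>"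
    by (simp only: comp_conv_assoc_left[OF assms] comp_conv_assoc_right[OF assms] comp_assoc)
qed

lemma comp_conv_unit_left:
  assumes "finite P" and "id \<in> P" and "\<tau> \<in> P"
  shows "comp_conv P (\<lambda>\<rho>. if \<rho> = id then 1 else 0) f \<tau> = f \<tau>"
proof -
  have "comp_conv P (\<lambda>\<rho>. if \<rho> = id then 1 else 0) f \<tau>
      = (\<Sum>\<rho>\<in>P. if \<rho> = id then \<Sum>\<sigma>\<in>P. if \<sigma> = \<tau> then f \<sigma> else 0 else 0)"
    unfolding comp_conv_def by (intro sum.cong refl) (auto cong: if_cong)
  then show ?thesis using assms by simp
qed

lemma comp_conv_unit_right:
  assumes "finite P" and "id \<in> P" and "\<tau> \<in> P"
  shows "comp_conv P f (\<lambda>\<sigma>. if \<sigma> = id then 1 else 0) \<tau> = f \<tau>"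
proof -
  have "comp_conv P f (\<lambda>\<sigma>. if \<sigma> = id then 1 else 0) \<tau>
      = (\<Sum>\<rho>\<in>P. \<Sum>\<sigma>\<in>P. if \<sigma> = id then (if \<rho> = \<tau> then f \<rho> else 0) else 0)"
    unfolding comp_conv_def by (intro sum.cong refl) (auto cong: if_cong)
  then show ?thesis using assms by simp
qed

lemma comp_perms: "\<rho> \<in> perms \<Longrightarrow> \<sigma> \<in> perms \<Longrightarrow> \<rho> \<circ> \<sigma> \<in> perms"
  unfolding perms_def using permutes_compose by blast

lemma id_perms: "id \<in> perms"
  unfolding perms_def by (simp add: permutes_id)

section \<open>Characters of the fusion rings\<close>

text \<open>Only this part of mtc_fusion_rules enters the proof: a unitary S-matrix diagonalising
  the fusion rules (Verlinde formula).\<close>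

locale modular_data =
  fixes N :: "'a::finite \<Rightarrow> 'a \<Rightarrow> 'a \<Rightarrow> nat" and one :: 'a and dual :: "'a \<Rightarrow> 'a"
    and S :: "'a \<Rightarrow> 'a \<Rightarrow> complex"
  assumes S_sym: "S a b = S b a"
    and S_unitary: "(\<Sum>x\<in>UNIV. S a x * cnj (S b x)) = (if a = b then 1 else 0)"
    and S_dual: "S (dual a) b = cnj (S a b)"
    and S_one_nonzero: "S one x \<noteq> 0"
    and verlinde: "of_nat (N a b c) = (\<Sum>x\<in>UNIV. S a x * S b x * cnj (S c x) / S one x)"

lemma Omega_support:
  assumes "i \<noteq> j"
  shows "{v. Omega dual one i j v = 1} = range (\<lambda>c k. if k = i then c else if k = j then dual c else one)"
    (is "_ = range ?v")
proof (rule set_eqI)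
  fix v
  have "v \<in> range ?v" if "v j = dual (v i)" "\<And>k. k \<noteq> i \<Longrightarrow> k \<noteq> j \<Longrightarrow> v k = one"
    using that assms by (intro range_eqI[of _ _ "v i"]) (auto simp: fun_eq_iff)
  then show "v \<in> {v. Omega dual one i j v = 1} \<longleftrightarrow> v \<in> range ?v"
    unfolding Omega_def using assms by auto
qed

lemma mtc_fusion_rules_modular_data:
  "mtc_fusion_rules N one dual \<Longrightarrow> \<exists>S. modular_data N one dual S"
  unfolding mtc_fusion_rules_def modular_data_def by (elim conjE) (simp only: conj_assoc)

context modular_data
begin

definition chi :: "'a \<Rightarrow> 'a \<Rightarrow> complex" where
  "chi a x = S a x / S one x"

lemma chi_one [simp]: "chi one x = 1"
  unfolding chi_def using S_one_nonzero by simp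

lemma S_column_unitary: "(\<Sum>c\<in>UNIV. S c x * cnj (S c z)) = (if x = z then 1 else 0)"
  using S_unitary[of x z] by (simp add: S_sym)

lemma chi_fusion: "(\<Sum>c\<in>UNIV. of_nat (N a b c) * chi c x) = chi a x * chi b x"
proof -
  have "(\<Sum>c\<in>UNIV. of_nat (N a b c) * S c x)
      = (\<Sum>c\<in>UNIV. \<Sum>z\<in>UNIV. (S a z * S b z / S one z) * (S c x * cnj (S c z)))"
    by (simp add: verlinde sum_distrib_left sum_distrib_right mult_ac)
  also have "\<dots> = (\<Sum>z\<in>UNIV. (S a z * S b z / S one z) * (\<Sum>c\<in>UNIV. S c x * cnj (S c z)))"
    by (subst sum.swap) (simp add: sum_distrib_left)
  also have "\<dots> = S a x * S b x / S one x"
    by (simp add: S_column_unitary if_distrib cong: if_cong)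
  finally show ?thesis
    unfolding chi_def using S_one_nonzero[of x]
    by (simp add: sum_divide_distrib[symmetric] field_simps)
qed

definition layer_char :: "('n \<Rightarrow> 'a) \<Rightarrow> (('n::finite \<Rightarrow> 'a) \<Rightarrow> int) \<Rightarrow> complex" where
  "layer_char y u = (\<Sum>v\<in>UNIV. of_int (u v) * (\<Prod>i\<in>UNIV. chi (v i) (y i)))"

definition orbit_char ::
    "('n \<Rightarrow> 'n) \<Rightarrow> ('n \<Rightarrow> 'a) \<Rightarrow> (('n::finite \<Rightarrow> 'a) \<Rightarrow> int) \<Rightarrow> complex" where
  "orbit_char \<pi> y r = (\<Sum>b\<in>{b. sfixed \<pi> b}. of_int (r b) *
      (\<Prod>O'\<in>orbs \<pi>. chi (b (orep O')) (y (orep O'))))"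

lemma layer_char_amul: "layer_char y (amul N u w) = layer_char y u * layer_char y w"
proof -
  let ?K = "\<lambda>v. \<Prod>i\<in>UNIV. chi (v i) (y i)"
  let ?T = "\<lambda>a b v. of_int (u a) * of_int (w b) *
              (\<Prod>i\<in>UNIV. of_nat (N (a i) (b i) (v i)) * chi (v i) (y i))"
  have "layer_char y (amul N u w) = (\<Sum>v\<in>UNIV. \<Sum>a\<in>UNIV. \<Sum>b\<in>UNIV. ?T a b v)"
    unfolding layer_char_def amul_def
    by (simp add: sum_distrib_left sum_distrib_right prod.distrib mult_ac)
  also have "\<dots> = (\<Sum>a\<in>UNIV. \<Sum>b\<in>UNIV. \<Sum>v\<in>UNIV. ?T a b v)"
    by (subst sum.swap) (rule sum.cong[OF refl], rule sum.swap)
  also have "\<dots> = (\<Sum>a\<in>UNIV. \<Sum>b\<in>UNIV. of_int (u a) * of_int (w b) * (?K a * ?K b))"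
  proof -
    have "(\<Sum>v\<in>UNIV. \<Prod>i\<in>UNIV. of_nat (N (a i) (b i) (v i)) * chi (v i) (y i)) = ?K a * ?K b"
      for a b
      by (subst sum_fun_prod) (simp only: chi_fusion prod.distrib)
    then show ?thesis by (simp add: sum_distrib_left[symmetric])
  qed
  also have "\<dots> = layer_char y u * layer_char y w"
    unfolding layer_char_def by (simp add: sum_product mult_ac)
  finally show ?thesis .
qed

lemma layer_char_delta: "layer_char y (delta a) = (\<Prod>i\<in>UNIV. chi (a i) (y i))"
  unfolding layer_char_def by (simp add: sum_delta)

lemma layer_char_unit: "layer_char y (delta (avec one)) = 1"
  unfolding layer_char_delta avec_def by simp

lemma chi_fmul_delta:
  "(\<Sum>c\<in>UNIV. of_int (fmul N (delta a) r c) * chi c x)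
     = chi a x * (\<Sum>b\<in>UNIV. of_int (r b) * chi b x)"
proof -
  have "fmul N (delta a) r c = (\<Sum>b\<in>UNIV. r b * int (N a b c))" for c
  proof -
    have "fmul N (delta a) r c = (\<Sum>a'\<in>UNIV. if a' = a then \<Sum>b\<in>UNIV. r b * int (N a' b c) else 0)"
      unfolding fmul_def by (rule sum.cong) (auto simp: delta_def)
    then show ?thesis by simp
  qed
  then have "(\<Sum>c\<in>UNIV. of_int (fmul N (delta a) r c) * chi c x)
      = (\<Sum>c\<in>UNIV. \<Sum>b\<in>UNIV. of_int (r b) * (of_nat (N a b c) * chi c x))"
    by (simp add: sum_distrib_left sum_distrib_right mult_ac)
  also have "\<dots> = (\<Sum>b\<in>UNIV. of_int (r b) * (\<Sum>c\<in>UNIV. of_nat (N a b c) * chi c x))"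
    by (subst sum.swap) (simp only: sum_distrib_left)
  also have "\<dots> = chi a x * (\<Sum>b\<in>UNIV. of_int (r b) * chi b x)"
    by (simp add: chi_fusion sum_distrib_left mult_ac)
  finally show ?thesis .
qed

lemma chi_fprod_list:
  "(\<Sum>c\<in>UNIV. of_int (fprod_list N one as c) * chi c x) = (\<Prod>a\<leftarrow>as. chi a x)"
proof (induction as)
  case Nil
  show ?case unfolding fprod_list_def by (simp add: sum_delta)
next
  case (Cons a as)
  have "fprod_list N one (a # as) = fmul N (delta a) (fprod_list N one as)"
    unfolding fprod_list_def by simp
  then show ?case using Cons.IH by (simp add: chi_fmul_delta)
qed

lemma orbit_char_delta:
  "sfixed \<pi> b \<Longrightarrow> orbit_char \<pi> y (delta b) = (\<Prod>O'\<in>orbs \<pi>. chi (b (orep O')) (y (orep O')))"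
  unfolding orbit_char_def by (rule sum_delta) auto

lemma orbit_char_unit: "orbit_char \<pi> y (delta (avec one)) = 1"
  using orbit_char_delta[OF sfixed_avec[of \<pi> one]] unfolding avec_def by simp

lemma orbit_char_id: "orbit_char id y r = layer_char y r"
  unfolding orbit_char_def layer_char_def sfixed_def
  by (simp add: prod_orbs_id[of "\<lambda>k. chi (_ k) (y k)"])

lemma orbit_char_sum:
  "finite I \<Longrightarrow> orbit_char \<pi> y (\<lambda>v. \<Sum>i\<in>I. g i v) = (\<Sum>i\<in>I. orbit_char \<pi> y (g i))"
  unfolding orbit_char_def by (simp add: sum_distrib_right) (rule sum.swap)

lemma orbit_char_scale: "orbit_char \<pi> y (\<lambda>v. c * r v) = of_int c * orbit_char \<pi> y r"
  unfolding orbit_char_def by (simp add: sum_distrib_left mult_ac)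

lemma orbit_char_zero: "orbit_char \<pi> y (\<lambda>v. 0) = 0"
  unfolding orbit_char_def by simp

lemma orbit_char_expand:
  "(\<Sum>a\<in>{a. sfixed \<pi> a}. of_int (r a) * orbit_char \<pi> y (delta a)) = orbit_char \<pi> y r"
  unfolding orbit_char_def[of \<pi> y r] by (intro sum.cong refl) (simp add: orbit_char_delta)

lemma orbit_char_rmul:
  fixes \<pi> :: "'n::finite \<Rightarrow> 'n"
  assumes "\<pi> permutes UNIV"
  shows "orbit_char \<pi> y (rmul N \<pi> r s) = orbit_char \<pi> y r * orbit_char \<pi> y s"
proof -
  let ?SF = "{b::'n \<Rightarrow> 'a. sfixed \<pi> b}"
  let ?K = "\<lambda>b. \<Prod>O'\<in>orbs \<pi>. chi (b (orep O')) (y (orep O'))"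
  let ?T = "\<lambda>u w b. of_int (r u) * of_int (s w) * (\<Prod>O'\<in>orbs \<pi>.
              of_nat (N (u (orep O')) (w (orep O')) (b (orep O'))) * chi (b (orep O')) (y (orep O')))"
  have "orbit_char \<pi> y (rmul N \<pi> r s) = (\<Sum>b\<in>?SF. \<Sum>u\<in>?SF. \<Sum>w\<in>?SF. ?T u w b)"
    unfolding orbit_char_def rmul_def
    by (simp add: sum_distrib_left sum_distrib_right prod.distrib mult_ac)
  also have "\<dots> = (\<Sum>u\<in>?SF. \<Sum>w\<in>?SF. \<Sum>b\<in>?SF. ?T u w b)"
    by (subst sum.swap) (rule sum.cong[OF refl], rule sum.swap)
  also have "\<dots> = (\<Sum>u\<in>?SF. \<Sum>w\<in>?SF. of_int (r u) * of_int (s w) * (?K u * ?K w))"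
  proof -
    have "(\<Sum>b\<in>?SF. \<Prod>O'\<in>orbs \<pi>. of_nat (N (u (orep O')) (w (orep O')) (b (orep O'))) *
              chi (b (orep O')) (y (orep O'))) = ?K u * ?K w" for u w
      by (subst sum_sfixed_prod[OF assms]) (simp only: chi_fusion prod.distrib)
    then show ?thesis by (simp add: sum_distrib_left[symmetric])
  qed
  also have "\<dots> = orbit_char \<pi> y r * orbit_char \<pi> y s"
    unfolding orbit_char_def by (simp add: sum_product mult_ac)
  finally show ?thesis .
qed

text \<open>Confining the layers of an orbit fuses their labels, and on a \<pi>-fixed label the
  characters of these layers coincide; so confinement intertwines the two characters.\<close>

lemma orbit_char_conf:
  fixes \<pi> :: "'n::finite \<Rightarrow> 'n"
  assumes perm: "\<pi> permutes UNIV" and y: "sfixed \<pi> y"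
  shows "orbit_char \<pi> y (conf N one \<pi> x) = layer_char y x"
proof -
  let ?SF = "{b::'n \<Rightarrow> 'a. sfixed \<pi> b}"
  let ?T = "\<lambda>u b. \<Prod>O'\<in>orbs \<pi>. of_int (fprod_list N one (map u (olist O')) (b (orep O'))) *
              chi (b (orep O')) (y (orep O'))"
  have inner: "(\<Sum>b\<in>?SF. ?T u b) = (\<Prod>i\<in>UNIV. chi (u i) (y i))" for u
  proof -
    have "(\<Sum>b\<in>?SF. ?T u b) = (\<Prod>O'\<in>orbs \<pi>. \<Prod>a\<leftarrow>map u (olist O'). chi a (y (orep O')))"
      by (subst sum_sfixed_prod[OF perm]) (simp only: chi_fprod_list)
    also have "\<dots> = (\<Prod>O'\<in>orbs \<pi>. \<Prod>k\<in>O'. chi (u k) (y k))"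
    proof (rule prod.cong[OF refl])
      fix O' assume O': "O' \<in> orbs \<pi>"
      have ol: "distinct (olist O')" "set (olist O') = O'" using olist_distinct_set[of O'] by auto
      have "(\<Prod>a\<leftarrow>map u (olist O'). chi a (y (orep O'))) = (\<Prod>k\<in>O'. chi (u k) (y (orep O')))"
        using prod.distinct_set_conv_list[OF ol(1), of "\<lambda>k. chi (u k) (y (orep O'))"]
        by (simp add: comp_def ol(2))
      also have "\<dots> = (\<Prod>k\<in>O'. chi (u k) (y k))"
        by (rule prod.cong[OF refl]) (simp add: sfixed_orep[OF y O'])
      finally show "(\<Prod>a\<leftarrow>map u (olist O'). chi a (y (orep O'))) = (\<Prod>k\<in>O'. chi (u k) (y k))" .
    qed
    also have "\<dots> = (\<Prod>k\<in>UNIV. chi (u k) (y k))"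
      by (rule prod_orbs[OF perm])
    finally show ?thesis .
  qed
  have "orbit_char \<pi> y (conf N one \<pi> x) = (\<Sum>u\<in>UNIV. \<Sum>b\<in>?SF. of_int (x u) * ?T u b)"
    unfolding orbit_char_def conf_def
    by (simp add: sum_distrib_left sum_distrib_right prod.distrib mult_ac) (rule sum.swap)
  also have "\<dots> = layer_char y x"
    unfolding layer_char_def by (simp add: sum_distrib_left[symmetric] inner)
  finally show ?thesis .
qed

text \<open>Fourier inversion on R_\<pi>, by unitarity of S.\<close>

lemma orbit_char_inversion:
  fixes \<pi> :: "'n::finite \<Rightarrow> 'n"
  assumes perm: "\<pi> permutes UNIV" and b: "sfixed \<pi> b"
  shows "(\<Sum>y\<in>{y. sfixed \<pi> y}. orbit_char \<pi> y r *
            (\<Prod>O'\<in>orbs \<pi>. S one (y (orep O')) * cnj (S (b (orep O')) (y (orep O')))))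
         = of_int (r b)"
proof -
  let ?SF = "{b::'n \<Rightarrow> 'a. sfixed \<pi> b}"
  let ?P = "\<lambda>b' y. \<Prod>O'\<in>orbs \<pi>. S (b' (orep O')) (y (orep O')) * cnj (S (b (orep O')) (y (orep O')))"
  have "orbit_char \<pi> y r * (\<Prod>O'\<in>orbs \<pi>. S one (y (orep O')) * cnj (S (b (orep O')) (y (orep O'))))
      = (\<Sum>b'\<in>?SF. of_int (r b') * ?P b' y)" for y
  proof -
    have "(\<Prod>O'\<in>orbs \<pi>. chi (b' (orep O')) (y (orep O'))) *
          (\<Prod>O'\<in>orbs \<pi>. S one (y (orep O')) * cnj (S (b (orep O')) (y (orep O')))) = ?P b' y" for b'
      unfolding prod.distrib[symmetric] by (rule prod.cong[OF refl]) (simp add: chi_def S_one_nonzero)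
    then show ?thesis
      unfolding orbit_char_def sum_distrib_right by (simp add: mult.assoc)
  qed
  then have "(\<Sum>y\<in>?SF. orbit_char \<pi> y r *
            (\<Prod>O'\<in>orbs \<pi>. S one (y (orep O')) * cnj (S (b (orep O')) (y (orep O')))))
      = (\<Sum>b'\<in>?SF. of_int (r b') * (\<Sum>y\<in>?SF. ?P b' y))"
    by (simp add: sum_distrib_left) (rule sum.swap)
  also have "\<dots> = (\<Sum>b'\<in>?SF. of_int (r b') * (if b' = b then 1 else 0))"
  proof (rule sum.cong[OF refl])
    fix b' assume "b' \<in> ?SF"
    have "(\<Sum>y\<in>?SF. ?P b' y) = (\<Prod>O'\<in>orbs \<pi>. if b' (orep O') = b (orep O') then 1 else 0)"
      by (subst sum_sfixed_prod[OF perm]) (simp only: S_unitary)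
    also have "\<dots> = (if b' = b then 1 else 0)"
      using sfixed_eq_iff[OF perm _ b, of b'] \<open>b' \<in> ?SF\<close> by (simp add: prod_indicator)
    finally show "of_int (r b') * (\<Sum>y\<in>?SF. ?P b' y) = of_int (r b') * (if b' = b then 1 else 0)"
      by simp
  qed
  also have "\<dots> = of_int (r b)"
    using b by (simp add: if_distrib cong: if_cong)
  finally show ?thesis .
qed

lemma orbit_char_inj:
  fixes \<pi> :: "'n::finite \<Rightarrow> 'n"
  assumes perm: "\<pi> permutes UNIV"
    and "\<And>v. \<not> sfixed \<pi> v \<Longrightarrow> r v = 0" and "\<And>v. \<not> sfixed \<pi> v \<Longrightarrow> r' v = 0"
    and "\<And>y. sfixed \<pi> y \<Longrightarrow> orbit_char \<pi> y r = orbit_char \<pi> y r'"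
  shows "r = r'"
proof
  fix b
  show "r b = r' b"
  proof (cases "sfixed \<pi> b")
    case True
    have "(of_int (r b) :: complex) = of_int (r' b)"
      unfolding orbit_char_inversion[OF perm True, symmetric] using assms(4) by simp
    then show ?thesis by simp
  qed (use assms(2,3) in simp)
qed

lemma layer_char_Omega:
  fixes i j :: "'n::finite"
  assumes "i \<noteq> j"
  shows "layer_char y (Omega dual one i j) = (if y i = y j then 1 / (S one (y i))\<^sup>2 else 0)"
proof -
  define vc where "vc = (\<lambda>c k. if k = i then c else if k = j then dual c else one)"
  let ?K = "\<lambda>v. \<Prod>k\<in>UNIV. chi (v k) (y k)"
  have "inj vc"
    unfolding vc_def inj_def by (metis (full_types))
  have support: "{v. Omega dual one i j v = 1} = range vc"
    unfolding vc_def by (rule Omega_support[OF assms])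
  have "layer_char y (Omega dual one i j) = (\<Sum>v\<in>UNIV. if Omega dual one i j v = 1 then ?K v else 0)"
    unfolding layer_char_def by (rule sum.cong[OF refl]) (simp add: Omega_def)
  also have "\<dots> = (\<Sum>v\<in>{v. Omega dual one i j v = 1}. ?K v)"
    by (simp add: sum.If_cases)
  also have "\<dots> = (\<Sum>c\<in>UNIV. ?K (vc c))"
    unfolding support using sum.reindex[OF \<open>inj vc\<close>, of ?K] by (simp add: comp_def)
  also have "\<dots> = (\<Sum>c\<in>UNIV. chi c (y i) * chi (dual c) (y j))"
  proof (rule sum.cong[OF refl])
    fix c
    have "?K (vc c) = (\<Prod>k\<in>UNIV. (if k = i then chi c (y i) else 1) * (if k = j then chi (dual c) (y j) else 1))"
      by (rule prod.cong[OF refl]) (use assms in \<open>auto simp: vc_def\<close>)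
    then show "?K (vc c) = chi c (y i) * chi (dual c) (y j)"
      by (simp add: prod.distrib)
  qed
  also have "\<dots> = (\<Sum>c\<in>UNIV. S c (y i) * cnj (S c (y j))) / (S one (y i) * S one (y j))"
    unfolding chi_def S_dual by (simp add: sum_divide_distrib)
  also have "\<dots> = (if y i = y j then 1 / (S one (y i))\<^sup>2 else 0)"
    unfolding S_column_unitary by (simp add: power2_eq_square)
  finally show ?thesis .
qed

lemma layer_char_Fword_Cons:
  assumes "i \<noteq> j"
  shows "layer_char y (Fword N dual one ((i, j) # ts) \<sigma>) =
    (if sameorb (word_comp ts \<sigma>) i j then (if y i = y j then 1 / (S one (y i))\<^sup>2 else 0) else 1)
      * layer_char y (Fword N dual one ts \<sigma>)"
  unfolding Fword_Cons layer_char_amul by (simp add: layer_char_Omega[OF assms] layer_char_unit)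

lemma layer_char_Fword_nonzero:
  fixes \<sigma> :: "'n::finite \<Rightarrow> 'n"
  assumes perm: "\<sigma> permutes UNIV" and "\<forall>(i, j)\<in>set ts. i \<noteq> j"
    and "sfixed (word_comp ts \<sigma>) y" and "layer_char y (Fword N dual one ts \<sigma>) \<noteq> 0"
  shows "sfixed \<sigma> y \<and> (\<forall>(i, j)\<in>set ts. y i = y j)"
  using assms(2-4)
proof (induction ts)
  case (Cons t ts)
  obtain i j where t: "t = (i, j)" by fastforce
  have "i \<noteq> j" using Cons.prems(1) t by auto
  let ?\<pi> = "word_comp ts \<sigma>"
  have sf: "sfixed (transpose i j \<circ> ?\<pi>) y"
    using Cons.prems(2) unfolding t word_comp_Cons .
  have nz: "sameorb ?\<pi> i j \<longrightarrow> y i = y j" "layer_char y (Fword N dual one ts \<sigma>) \<noteq> 0"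
    using Cons.prems(3) unfolding t layer_char_Fword_Cons[OF \<open>i \<noteq> j\<close>] by (auto split: if_splits)
  have "y i = y j"
  proof (cases "sameorb ?\<pi> i j")
    case False
    then have "sameorb (transpose i j \<circ> ?\<pi>) i j"
      by (rule sameorb_transpose_comp_join[OF word_comp_permutes[OF perm]])
    then show ?thesis
      using sfixed_porb[OF sf] by (simp add: sameorb_iff)
  qed (use nz in simp)
  then have "sfixed ?\<pi> y"
    using sf sfixed_transpose_comp_iff[of y i j ?\<pi>] by simp
  moreover have "\<forall>(i, j)\<in>set ts. i \<noteq> j"
    using Cons.prems(1) by simp
  ultimately have "sfixed \<sigma> y \<and> (\<forall>(i, j)\<in>set ts. y i = y j)"
    using Cons.IH nz(2) by blast
  then show ?case
    using \<open>y i = y j\<close> t by simp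
qed simp

text \<open>Each letter (i j) contributes a factor 1 / S(1, y i): if it splits an orbit there is
  an \<Omega> factor 1 / S(1, y i)^2 and one orbit more, if it joins two orbits there is no \<Omega>
  factor and one orbit less.\<close>

lemma layer_char_Fword_weight:
  fixes \<sigma> :: "'n::finite \<Rightarrow> 'n"
  assumes perm: "\<sigma> permutes UNIV" and "\<forall>(i, j)\<in>set ts. i \<noteq> j"
    and y: "sfixed \<sigma> y" and "\<forall>(i, j)\<in>set ts. y i = y j"
  shows "layer_char y (Fword N dual one ts \<sigma>) * orbit_weight (S one) y (word_comp ts \<sigma>)
      = orbit_weight (S one) y \<sigma> * (\<Prod>(i, j)\<leftarrow>ts. 1 / S one (y i))"
  using assms(2,4)
proof (induction ts)
  case Nil
  then show ?case by (simp add: layer_char_unit)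
next
  case (Cons t ts)
  obtain i j where t: "t = (i, j)" by fastforce
  have "i \<noteq> j" "y i = y j" using Cons.prems t by auto
  let ?\<pi> = "word_comp ts \<sigma>"
  have "sfixed ?\<pi> y"
    using comp_word_comp_eq[of ts y] Cons.prems(2) y t
    by (simp add: sfixed_iff_comp word_comp_eq_comp[of ts \<sigma>] comp_assoc[symmetric])
  then have step: "orbit_weight (S one) y (transpose i j \<circ> ?\<pi>) = (if sameorb ?\<pi> i j
      then orbit_weight (S one) y ?\<pi> * S one (y i) else orbit_weight (S one) y ?\<pi> / S one (y i))"
    using orbit_weight_transpose_comp[OF word_comp_permutes[OF perm] \<open>i \<noteq> j\<close>]
      \<open>y i = y j\<close> S_one_nonzero by blast
  moreover have "layer_char y (Fword N dual one ts \<sigma>) * orbit_weight (S one) y ?\<pi>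
      = orbit_weight (S one) y \<sigma> * (\<Prod>(i, j)\<leftarrow>ts. 1 / S one (y i))"
    using Cons t by simp
  ultimately show ?case
    unfolding t layer_char_Fword_Cons[OF \<open>i \<noteq> j\<close>] word_comp_Cons step
    using \<open>y i = y j\<close> S_one_nonzero[of "y i"] by (simp add: power2_eq_square field_simps)
qed

lemma layer_char_Fword_id: "fresh_heads ts \<Longrightarrow> layer_char y (Fword N dual one ts id) = 1"
proof (induction ts rule: fresh_heads.induct)
  case (2 i j ts)
  then have "i \<noteq> j" by simp
  from 2 have "porb (word_comp ts id) i = {i}"
    using word_comp_fixes[of i ts] orbit_eq_singleton_iff[of "word_comp ts id" i]
    by (simp add: porb_eq_orbit word_comp_permutes)
  then have "\<not> sameorb (word_comp ts id) i j"
    using 2 by (auto simp: sameorb_iff)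
  moreover have "layer_char y (Fword N dual one ts id) = 1"
    using 2 by (simp add: id_def)
  ultimately show ?case
    unfolding layer_char_Fword_Cons[OF \<open>i \<noteq> j\<close>] by simp
qed (simp add: layer_char_unit)

lemma layer_char_F_vanishes:
  fixes \<rho> \<sigma> :: "'n::finite \<Rightarrow> 'n"
  assumes "\<sigma> permutes UNIV" and "is_cycle_decomp \<rho> cs"
    and "sfixed (\<rho> \<circ> \<sigma>) y" and "\<not> sfixed \<rho> y"
  shows "layer_char y (Fword N dual one (transp_list cs) \<sigma>) = 0"
proof (rule ccontr)
  let ?ts = "transp_list cs"
  note \<rho> = is_cycle_decomp_word_comp(1)[OF assms(2)]
  assume "layer_char y (Fword N dual one ?ts \<sigma>) \<noteq> 0"
  moreover have "\<forall>(i, j)\<in>set ?ts. i \<noteq> j"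
    using fresh_heads_neq[OF is_cycle_decomp_word_comp(2)[OF assms(2)]] by auto
  moreover have "word_comp ?ts \<sigma> = \<rho> \<circ> \<sigma>"
    using \<rho> word_comp_eq_comp[of ?ts \<sigma>] by simp
  ultimately have "\<forall>(i, j)\<in>set ?ts. y i = y j"
    using layer_char_Fword_nonzero[OF assms(1)] assms(3) by simp
  then have "y \<circ> \<rho> = y"
    unfolding \<rho> by (rule comp_word_comp_eq)
  then show False
    using assms(4) by (simp add: sfixed_iff_comp)
qed

lemma layer_char_F:
  fixes \<rho> \<sigma> :: "'n::finite \<Rightarrow> 'n"
  assumes "\<sigma> permutes UNIV" and "is_cycle_decomp \<rho> cs"
    and y: "sfixed (\<rho> \<circ> \<sigma>) y"
  shows "layer_char y (Fword N dual one (transp_list cs) \<sigma>) =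
    (if sfixed \<rho> y then orbit_weight (S one) y \<rho> * orbit_weight (S one) y \<sigma> / orbit_weight (S one) y (\<rho> \<circ> \<sigma>)
     else 0)"
proof (cases "sfixed \<rho> y")
  case True
  let ?ts = "transp_list cs" and ?w = "orbit_weight (S one) y"
  note \<rho> = is_cycle_decomp_word_comp(1)[OF assms(2)]
    and fresh = is_cycle_decomp_word_comp(2)[OF assms(2)]
  have neq: "\<forall>(i, j)\<in>set ?ts. i \<noteq> j"
    using fresh_heads_neq[OF fresh] by auto
  have "\<forall>(i, j)\<in>set ?ts. y i = y j"
    using layer_char_Fword_nonzero[OF permutes_id neq, of y] True layer_char_Fword_id[OF fresh] \<rho>
    by simp
  then have "?w \<rho> = ?w id * (\<Prod>(i, j)\<leftarrow>?ts. 1 / S one (y i))"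
    and "layer_char y (Fword N dual one ?ts \<sigma>) * ?w (\<rho> \<circ> \<sigma>)
           = ?w \<sigma> * (\<Prod>(i, j)\<leftarrow>?ts. 1 / S one (y i))"
    using layer_char_Fword_weight[OF permutes_id neq sfixed_id]
      layer_char_Fword_weight[OF assms(1) neq sfixed_comp_right[OF y True]]
      layer_char_Fword_id[OF fresh] \<rho> word_comp_eq_comp[of ?ts \<sigma>] by simp_all
  moreover have "?w id = 1" "?w (\<rho> \<circ> \<sigma>) \<noteq> 0"
    using orbit_weight_id orbit_weight_nonzero S_one_nonzero by blast+
  ultimately show ?thesis
    using True by (simp add: field_simps)
qed (simp add: layer_char_F_vanishes[OF assms])

text \<open>Multiplying by the orbit weight absorbs the coboundary of layer_char_F, so that the
  transform turns the fusion product into plain convolution.\<close>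

definition fourier :: "('n \<Rightarrow> 'a) \<Rightarrow> (('n::finite \<Rightarrow> 'n) \<Rightarrow> ('n \<Rightarrow> 'a) \<Rightarrow> int) \<Rightarrow> ('n \<Rightarrow> 'n) \<Rightarrow> complex"
  where "fourier y x \<tau> =
    (if sfixed \<tau> y then orbit_char \<tau> y (x \<tau>) * orbit_weight (S one) y \<tau> else 0)"

lemma Xb_same: "Xb \<rho> a \<rho> = delta a"
  unfolding Xb_def delta_def by auto

lemma fourier_Xb:
  "fourier y (Xb \<rho> a) \<rho> =
     (if sfixed \<rho> y then orbit_char \<rho> y (delta a) * orbit_weight (S one) y \<rho> else 0)"
  unfolding fourier_def Xb_same ..

lemma fourier_expand:
  "fourier y x \<rho> = (\<Sum>a\<in>{a. sfixed \<rho> a}. of_int (x \<rho> a) * fourier y (Xb \<rho> a) \<rho>)"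
proof (cases "sfixed \<rho> y")
  case True
  have "fourier y x \<rho> = orbit_char \<rho> y (x \<rho>) * orbit_weight (S one) y \<rho>"
    using True by (simp add: fourier_def)
  also have "\<dots> = (\<Sum>a\<in>{a. sfixed \<rho> a}. of_int (x \<rho> a) * orbit_char \<rho> y (delta a))
      * orbit_weight (S one) y \<rho>"
    by (simp only: orbit_char_expand)
  also have "\<dots> = (\<Sum>a\<in>{a. sfixed \<rho> a}. of_int (x \<rho> a) * fourier y (Xb \<rho> a) \<rho>)"
    using True by (simp add: fourier_Xb sum_distrib_right mult.assoc)
  finally show ?thesis .
qed (simp add: fourier_def)

lemma fourier_unit: "fourier y (Xb id (avec one)) = (\<lambda>\<tau>. if \<tau> = id then 1 else 0)"
proof
  fix \<tau>
  show "fourier y (Xb id (avec one)) \<tau> = (if \<tau> = id then 1 else 0)"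
  proof (cases "\<tau> = id")
    case True
    then show ?thesis
      using orbit_weight_id[of "S one" y, OF S_one_nonzero]
      by (simp add: fourier_Xb sfixed_id orbit_char_unit)
  next
    case False
    then have "Xb id (avec one) \<tau> = (\<lambda>v. 0)"
      unfolding Xb_def by auto
    then show ?thesis
      using False by (simp add: fourier_def orbit_char_zero)
  qed
qed

lemma fourier_inj:
  assumes "valid_elem x" and "valid_elem x'"
    and "\<And>\<tau> y. \<tau> \<in> perms \<Longrightarrow> fourier y x \<tau> = fourier y x' \<tau>"
  shows "x = x'"
proof
  fix \<tau>
  show "x \<tau> = x' \<tau>"
  proof (cases "\<tau> permutes UNIV")
    case True
    show ?thesis
    proof (rule orbit_char_inj[OF True])
      show "x \<tau> v = 0" "x' \<tau> v = 0" if "\<not> sfixed \<tau> v" for v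
        using assms(1,2) that unfolding valid_elem_def by blast+
      show "orbit_char \<tau> y (x \<tau>) = orbit_char \<tau> y (x' \<tau>)" if "sfixed \<tau> y" for y
        using assms(3)[of \<tau> y] True that orbit_weight_nonzero[of "S one" y \<tau>, OF S_one_nonzero]
        by (simp add: fourier_def perms_def)
    qed
  next
    case False
    then have "x \<tau> v = 0" "x' \<tau> v = 0" for v
      using assms(1,2) unfolding valid_elem_def by blast+
    then show ?thesis by auto
  qed
qed

end

lemma bprod_support:
  assumes "bprod N dual one D dec \<rho> a \<sigma> b \<tau> v \<noteq> 0"
  shows "\<tau> = \<rho> \<circ> \<sigma>" and "sfixed \<tau> v"
  using assms unfolding bprod_def Xr_def rmul_def by (auto simp: sfixed_id split: if_splits)

lemma valid_dmul: "valid_elem (dmul N dual one D dec x y)"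
  unfolding valid_elem_def
proof (intro allI impI)
  fix \<tau> v
  assume "dmul N dual one D dec x y \<tau> v \<noteq> 0"
  then obtain \<rho> where \<rho>: "\<rho> \<in> perms" and nz: "(\<Sum>a\<in>{a. sfixed \<rho> a}. \<Sum>\<sigma>\<in>perms.
      \<Sum>b\<in>{b. sfixed \<sigma> b}. x \<rho> a * y \<sigma> b * bprod N dual one D dec \<rho> a \<sigma> b \<tau> v) \<noteq> 0"
    unfolding dmul_def by (rule sum.not_neutral_contains_not_neutral)
  from nz obtain a where "(\<Sum>\<sigma>\<in>perms.
      \<Sum>b\<in>{b. sfixed \<sigma> b}. x \<rho> a * y \<sigma> b * bprod N dual one D dec \<rho> a \<sigma> b \<tau> v) \<noteq> 0"
    by (rule sum.not_neutral_contains_not_neutral)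
  then obtain \<sigma> where \<sigma>: "\<sigma> \<in> perms" and nz': "(\<Sum>b\<in>{b. sfixed \<sigma> b}.
      x \<rho> a * y \<sigma> b * bprod N dual one D dec \<rho> a \<sigma> b \<tau> v) \<noteq> 0"
    by (rule sum.not_neutral_contains_not_neutral)
  from nz' obtain b where "x \<rho> a * y \<sigma> b * bprod N dual one D dec \<rho> a \<sigma> b \<tau> v \<noteq> 0"
    by (rule sum.not_neutral_contains_not_neutral)
  then have "bprod N dual one D dec \<rho> a \<sigma> b \<tau> v \<noteq> 0"
    by auto
  then have "\<tau> = \<rho> \<circ> \<sigma>" and "sfixed \<tau> v"
    by (rule bprod_support)+
  then show "\<tau> permutes UNIV \<and> sfixed \<tau> v"
    using comp_perms[OF \<rho> \<sigma>] by (simp add: perms_def)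
qed

locale defect_fusion = modular_data N one dual S
  for N :: "'a::finite \<Rightarrow> 'a \<Rightarrow> 'a \<Rightarrow> nat" and one dual S +
  fixes D :: "('n::finite \<Rightarrow> 'n) \<Rightarrow> ('n \<Rightarrow> 'a) \<Rightarrow> ('n \<Rightarrow> 'a) \<Rightarrow> int"
    and dec :: "('n \<Rightarrow> 'n) \<Rightarrow> 'n list list"
  assumes deconf: "is_deconf N one D"
    and decomp: "\<rho> permutes UNIV \<Longrightarrow> is_cycle_decomp \<rho> (dec \<rho>)"
begin

lemma layer_char_deconf:
  assumes "\<rho> permutes UNIV" and "sfixed \<rho> a" and "sfixed \<rho> y"
  shows "layer_char y (D \<rho> a) = orbit_char \<rho> y (delta a)"
proof -
  have "rmul N \<rho> (conf N one \<rho> (D \<rho> a)) (delta (avec one)) = delta a"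
    using deconf assms(1,2) unfolding is_deconf_def by blast
  then have "orbit_char \<rho> y (delta a) = orbit_char \<rho> y (conf N one \<rho> (D \<rho> a))"
    using orbit_char_rmul[OF assms(1)] orbit_char_unit by (metis mult.right_neutral)
  then show ?thesis
    using orbit_char_conf[OF assms(1,3)] by simp
qed

lemma orbit_char_bprod:
  assumes \<rho>: "\<rho> permutes UNIV" and \<sigma>: "\<sigma> permutes UNIV"
    and a: "sfixed \<rho> a" and b: "sfixed \<sigma> b" and y: "sfixed (\<rho> \<circ> \<sigma>) y"
  shows "orbit_char (\<rho> \<circ> \<sigma>) y (bprod N dual one D dec \<rho> a \<sigma> b (\<rho> \<circ> \<sigma>))
      * orbit_weight (S one) y (\<rho> \<circ> \<sigma>)
    = (if sfixed \<rho> y then orbit_char \<rho> y (delta a) * orbit_weight (S one) y \<rho>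
         * (orbit_char \<sigma> y (delta b) * orbit_weight (S one) y \<sigma>) else 0)"
proof -
  have w_id: "orbit_weight (S one) y id = 1"
    using orbit_weight_id S_one_nonzero by blast
  show ?thesis
  proof (cases "\<rho> = id"; cases "\<sigma> = id")
    assume "\<rho> = id" "\<sigma> = id"
    then show ?thesis
      by (simp add: bprod_def Xr_def w_id orbit_char_id layer_char_amul sfixed_id)
  next
    assume "\<rho> = id" "\<sigma> \<noteq> id"
    then show ?thesis
      using y by (simp add: bprod_def Xr_def w_id orbit_char_rmul[OF \<sigma>] orbit_char_conf[OF \<sigma>]
          orbit_char_id sfixed_id)
  next
    assume "\<rho> \<noteq> id" "\<sigma> = id"
    then show ?thesis
      using y by (simp add: bprod_def Xr_def w_id orbit_char_rmul[OF \<rho>] orbit_char_conf[OF \<rho>]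
          orbit_char_id sfixed_id mult_ac)
  next
    assume "\<rho> \<noteq> id" "\<sigma> \<noteq> id"
    have \<rho>\<sigma>: "\<rho> \<circ> \<sigma> permutes UNIV"
      by (rule permutes_compose[OF \<sigma> \<rho>])
    have "orbit_char (\<rho> \<circ> \<sigma>) y (bprod N dual one D dec \<rho> a \<sigma> b (\<rho> \<circ> \<sigma>))
      = layer_char y (D \<rho> a) * layer_char y (D \<sigma> b)
        * layer_char y (Fword N dual one (transp_list (dec \<rho>)) \<sigma>)"
      using \<open>\<rho> \<noteq> id\<close> \<open>\<sigma> \<noteq> id\<close>
      by (simp add: bprod_def Xr_def orbit_char_rmul[OF \<rho>\<sigma>] orbit_char_conf[OF \<rho>\<sigma> y]
          orbit_char_unit layer_char_amul)
    then show ?thesis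
      using layer_char_F[OF \<sigma> decomp[OF \<rho>] y] sfixed_comp_right[OF y]
        layer_char_deconf[OF \<rho> a] layer_char_deconf[OF \<sigma> b]
        orbit_weight_nonzero[of "S one" y "\<rho> \<circ> \<sigma>", OF S_one_nonzero]
      by auto
  qed
qed

lemma fourier_bprod:
  assumes "\<rho> permutes UNIV" and "\<sigma> permutes UNIV" and "sfixed \<rho> a" and "sfixed \<sigma> b"
  shows "fourier y (bprod N dual one D dec \<rho> a \<sigma> b) \<tau>
    = (if \<rho> \<circ> \<sigma> = \<tau> then fourier y (Xb \<rho> a) \<rho> * fourier y (Xb \<sigma> b) \<sigma> else 0)"
proof (cases "\<rho> \<circ> \<sigma> = \<tau>")
  case True
  show ?thesis
  proof (cases "sfixed \<tau> y")
    case False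
    then show ?thesis
      using True sfixed_comp[of \<rho> y \<sigma>] by (auto simp: fourier_def)
  next
    case fixed: True
    then show ?thesis
      using True orbit_char_bprod[OF assms, of y] sfixed_comp_right[of \<rho> \<sigma> y]
      by (auto simp: fourier_def Xb_same)
  qed
next
  case False
  then have "bprod N dual one D dec \<rho> a \<sigma> b \<tau> = (\<lambda>v. 0)"
    using bprod_support(1) by blast
  then show ?thesis
    using False by (simp add: fourier_def orbit_char_zero)
qed

lemma fourier_dmul:
  "fourier y (dmul N dual one D dec x x') = comp_conv perms (fourier y x) (fourier y x')"
proof
  fix \<tau>
  let ?SF = "\<lambda>\<pi>. {b :: 'n \<Rightarrow> 'a. sfixed \<pi> b}" and ?X = "\<lambda>\<rho> a. fourier y (Xb \<rho> a) \<rho>"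
  have "fourier y (dmul N dual one D dec x x') \<tau> = (\<Sum>\<rho>\<in>perms. \<Sum>a\<in>?SF \<rho>. \<Sum>\<sigma>\<in>perms. \<Sum>b\<in>?SF \<sigma>.
      of_int (x \<rho> a) * of_int (x' \<sigma> b) * fourier y (bprod N dual one D dec \<rho> a \<sigma> b) \<tau>)"
    by (cases "sfixed \<tau> y")
      (simp_all add: fourier_def dmul_def orbit_char_sum orbit_char_scale sum_distrib_left mult_ac)
  also have "\<dots> = (\<Sum>\<rho>\<in>perms. \<Sum>a\<in>?SF \<rho>. \<Sum>\<sigma>\<in>perms. \<Sum>b\<in>?SF \<sigma>.
      of_int (x \<rho> a) * of_int (x' \<sigma> b) * (if \<rho> \<circ> \<sigma> = \<tau> then ?X \<rho> a * ?X \<sigma> b else 0))"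
    by (intro sum.cong refl) (simp add: fourier_bprod perms_def)
  also have "\<dots> = (\<Sum>\<rho>\<in>perms. \<Sum>\<sigma>\<in>perms. \<Sum>a\<in>?SF \<rho>. \<Sum>b\<in>?SF \<sigma>.
      of_int (x \<rho> a) * of_int (x' \<sigma> b) * (if \<rho> \<circ> \<sigma> = \<tau> then ?X \<rho> a * ?X \<sigma> b else 0))"
    by (rule sum.cong[OF refl], rule sum.swap)
  also have "\<dots> = comp_conv perms (fourier y x) (fourier y x') \<tau>"
    unfolding comp_conv_def sum_sum_if_mult fourier_expand[of y x] fourier_expand[of y x'] ..
  finally show "fourier y (dmul N dual one D dec x x') \<tau> = comp_conv perms (fourier y x) (fourier y x') \<tau>" .
qed

lemma dmul_assoc:
  "dmul N dual one D dec (dmul N dual one D dec x x') x''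
    = dmul N dual one D dec x (dmul N dual one D dec x' x'')"
  by (rule fourier_inj[OF valid_dmul valid_dmul])
    (simp add: fourier_dmul comp_conv_assoc comp_perms)

lemma dmul_unit_left:
  assumes "valid_elem x"
  shows "dmul N dual one D dec (Xb id (avec one)) x = x"
  by (rule fourier_inj[OF valid_dmul assms])
    (simp add: fourier_dmul fourier_unit comp_conv_unit_left id_perms cong: if_cong)

lemma dmul_unit_right:
  assumes "valid_elem x"
  shows "dmul N dual one D dec x (Xb id (avec one)) = x"
  by (rule fourier_inj[OF valid_dmul assms])
    (simp add: fourier_dmul fourier_unit comp_conv_unit_right id_perms cong: if_cong)

end

theorem lemma4p16:
  fixes N :: "'a::finite \<Rightarrow> 'a \<Rightarrow> 'a \<Rightarrow> nat" and one :: 'a and dual :: "'a \<Rightarrow> 'a"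
    and D :: "('n::finite \<Rightarrow> 'n) \<Rightarrow> ('n \<Rightarrow> 'a) \<Rightarrow> ('n \<Rightarrow> 'a) \<Rightarrow> int"
    and dec :: "('n \<Rightarrow> 'n) \<Rightarrow> 'n list list"
    and x y z :: "('n \<Rightarrow> 'n) \<Rightarrow> ('n \<Rightarrow> 'a) \<Rightarrow> int"
  assumes "card (UNIV :: 'n set) \<ge> 2"
    and "mtc_fusion_rules N one dual"
    and "is_deconf N one D"
    and "\<forall>\<rho>. \<rho> permutes UNIV \<longrightarrow> is_cycle_decomp \<rho> (dec \<rho>)"
    and "valid_elem x" and "valid_elem y" and "valid_elem z"
  shows "dmul N dual one D dec (dmul N dual one D dec x y) z
           = dmul N dual one D dec x (dmul N dual one D dec y z)
       \<and> dmul N dual one D dec (Xb id (avec one)) x = x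
       \<and> dmul N dual one D dec x (Xb id (avec one)) = x"
proof -
  obtain S where "modular_data N one dual S"
    using mtc_fusion_rules_modular_data[OF assms(2)] ..
  with assms(3,4) interpret defect_fusion N one dual S D dec
    by (simp add: defect_fusion_def defect_fusion_axioms_def)
  show ?thesis
    using dmul_assoc dmul_unit_left[OF assms(5)] dmul_unit_right[OF assms(5)] by blast
qed

end
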